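(* Let $G$ be a word-representable split graph. Then $\mathcal{R}(G)\le 3$.
   Context: A split graph is a graph whose vertex set can be partitioned into a clique and an independent set. A word over a finite set $X$ is a finite sequence of elements of $X$; two letters $x,y$ alternate in a word $u$ if the subsequence of $u$ consisting of all occurrences of $x$ and $y$ is of the form $xyxy\cdots$ or $yxyx\cdots$ (even or odd length). A graph $G=(V,E)$ is word-representable if there is a word $w$ over $V$ (each vertex occurring) such that for all distinct $a,b\in V$, $ab\in E$ if and only if $a$ and $b$ alternate in $w$; $w$ is then said to represent $G$. A word is $k$-uniform if every letter occurs exactly $k$ times. The representation number $\mathcal{R}(G)$ of a word-representable graph $G$ is the smallest $k$ such that some $k$-uniform word represents $G$. *)

theory Defs
  imports Main
begin

definition simple_graph :: "'a set \<Rightarrow> ('a \<Rightarrow> 'a \<Rightarrow> bool) \<Rightarrow> bool" where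
  "simple_graph V E \<longleftrightarrow> finite V \<and> (\<forall>a b. E a b \<longrightarrow> a \<in> V \<and> b \<in> V) \<and>
     (\<forall>a b. E a b \<longrightarrow> E b a) \<and> (\<forall>a. \<not> E a a)"

definition is_clique :: "('a \<Rightarrow> 'a \<Rightarrow> bool) \<Rightarrow> 'a set \<Rightarrow> bool" where
  "is_clique E K \<longleftrightarrow> (\<forall>a\<in>K. \<forall>b\<in>K. a \<noteq> b \<longrightarrow> E a b)"

definition is_independent :: "('a \<Rightarrow> 'a \<Rightarrow> bool) \<Rightarrow> 'a set \<Rightarrow> bool" where
  "is_independent E I \<longleftrightarrow> (\<forall>a\<in>I. \<forall>b\<in>I. \<not> E a b)"

definition split_graph :: "'a set \<Rightarrow> ('a \<Rightarrow> 'a \<Rightarrow> bool) \<Rightarrow> bool" where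
  "split_graph V E \<longleftrightarrow> (\<exists>K I. K \<union> I = V \<and> K \<inter> I = {} \<and> is_clique E K \<and> is_independent E I)"

definition alternate :: "'a list \<Rightarrow> 'a \<Rightarrow> 'a \<Rightarrow> bool" where
  "alternate w x y \<longleftrightarrow>
     (let u = filter (\<lambda>z. z = x \<or> z = y) w in \<forall>i. Suc i < length u \<longrightarrow> u ! i \<noteq> u ! Suc i)"

definition represents :: "'a list \<Rightarrow> 'a set \<Rightarrow> ('a \<Rightarrow> 'a \<Rightarrow> bool) \<Rightarrow> bool" where
  "represents w V E \<longleftrightarrow> set w = V \<and>
     (\<forall>a\<in>V. \<forall>b\<in>V. a \<noteq> b \<longrightarrow> (E a b \<longleftrightarrow> alternate w a b))"

definition word_representable :: "'a set \<Rightarrow> ('a \<Rightarrow> 'a \<Rightarrow> bool) \<Rightarrow> bool" where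
  "word_representable V E \<longleftrightarrow> (\<exists>w. represents w V E)"

definition uniform :: "nat \<Rightarrow> 'a list \<Rightarrow> bool" where
  "uniform k w \<longleftrightarrow> (\<forall>x\<in>set w. count_list w x = k)"

definition representation_number :: "'a set \<Rightarrow> ('a \<Rightarrow> 'a \<Rightarrow> bool) \<Rightarrow> nat" where
  "representation_number V E = (LEAST k. \<exists>w. uniform k w \<and> represents w V E)"

end

(*
  Any representing word can be padded to an m-uniform one by repeatedly prepending, in the
  order of their first occurrences, the letters that occur fewest times.

  In an m-uniform word representing a split graph with clique K, |K| = n, the clique letters
  pairwise alternate, so they form m rounds of one fixed permutation of K; the t-th occurrence
  of the clique vertex k sits at clique-position n t + r k, where r k < n is its rank in that
  permutation. Give every other letter a fractional position between the neighbouring clique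
  letters and subtract n t from the position of a t-th occurrence: this phase is the constant
  r k for a clique vertex k, and comparing phases modulo n decides alternation. An independent
  vertex v is then adjacent to k iff r k lies on the arc of the circle R/nZ from the largest to
  the smallest phase of v, and the arcs of two independent vertices are never interleaved.

  Shift each such arc by a multiple of n so that it either contains 0 or lies in (0, n). Clique
  vertex k gets the keys r k, r k + n, r k + 2 n; a vertex with wrapping arc [lo, hi] gets hi, n,
  2 n + lo; a vertex with non-wrapping arc gets lo, n + hi, 2 n + c, where c is a point common to
  all non-wrapping arcs; ties at n and at 2 n + c are broken by the order of hi resp. lo, and
  isolated vertices come last. Sorting the letters by key gives a 3-uniform word in which two
  letters alternate iff their keys interleave, which happens exactly for the edges.
*)

theory Submission
  imports Defs Complex_Main "HOL-Library.Product_Lexorder" "HOL-Library.Multiset"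
begin

section \<open>Prefix counts and alternation\<close>

lemma hd_filter_satisfies: "filter P w \<noteq> [] \<Longrightarrow> P (hd (filter P w))"
  by (induction w) auto

lemma alternate_iff_successively:
  "alternate w x y \<longleftrightarrow> successively (\<noteq>) (filter (\<lambda>z. z = x \<or> z = y) w)"
  unfolding alternate_def Let_def successively_conv_nth by simp

definition prefix_count :: "'a list \<Rightarrow> 'a \<Rightarrow> nat \<Rightarrow> nat" where
  "prefix_count w x i = count_list (take i w) x"

definition prefix_count_in :: "'a list \<Rightarrow> 'a set \<Rightarrow> nat \<Rightarrow> nat" where
  "prefix_count_in w A i = length (filter (\<lambda>z. z \<in> A) (take i w))"

lemma prefix_count_Cons_0 [simp]: "prefix_count (z # w) x 0 = 0"
  by (simp add: prefix_count_def)

lemma prefix_count_Cons_Suc [simp]: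
  "prefix_count (z # w) x (Suc i) = (if z = x then 1 else 0) + prefix_count w x i"
  by (simp add: prefix_count_def)

lemma prefix_count_Suc:
  "i < length w \<Longrightarrow> prefix_count w x (Suc i) =
      prefix_count w x i + (if w ! i = x then 1 else 0)"
  by (simp add: prefix_count_def take_Suc_conv_app_nth)

lemma prefix_count_mono: "i \<le> i' \<Longrightarrow> prefix_count w x i \<le> prefix_count w x i'"
proof -
  assume "i \<le> i'"
  then obtain d where "i' = i + d" using le_Suc_ex by blast
  then have "take i' w = take i w @ take d (drop i w)" by (simp add: take_add)
  then show ?thesis by (simp add: prefix_count_def)
qed

lemma prefix_count_le_count_list: "prefix_count w x i \<le> count_list w x"
proof -
  have "count_list w x = count_list (take i w @ drop i w) x" by simp
  then show ?thesis unfolding prefix_count_def by (simp only: count_list_append)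
qed

lemma prefix_count_length: "prefix_count w x (length w) = count_list w x"
  by (simp add: prefix_count_def)

lemma prefix_count_less_count_list:
  "i < length w \<Longrightarrow> w ! i = x \<Longrightarrow> prefix_count w x i < count_list w x"
  using prefix_count_Suc[of i w x] prefix_count_le_count_list[of w x "Suc i"] by simp

lemma less_if_prefix_count_less: "prefix_count w x i < prefix_count w x i' \<Longrightarrow> i < i'"
  using prefix_count_mono[of i' i w x] by (cases "i' \<le> i") auto

lemma prefix_count_less_if_less:
  "i < i' \<Longrightarrow> i < length w \<Longrightarrow> w ! i = x \<Longrightarrow>
      prefix_count w x i < prefix_count w x i'"
  using prefix_count_Suc[of i w x] prefix_count_mono[of "Suc i" i' w x] by simp

lemma occurrence_with_prefix_count:
  "t < count_list w x \<Longrightarrow> \<exists>i<length w. w ! i = x \<and> prefix_count w x i = t"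
proof (induction w arbitrary: t)
  case (Cons a w)
  show ?case
  proof (cases "a = x \<and> t = 0")
    case True
    then show ?thesis by (intro exI[of _ 0]) simp
  next
    case False
    then have "t - (if a = x then 1 else 0) < count_list w x" using Cons.prems by auto
    then obtain i where "i < length w" "w ! i = x"
      "prefix_count w x i = t - (if a = x then 1 else 0)"
      using Cons.IH by blast
    then show ?thesis using False by (intro exI[of _ "Suc i"]) auto
  qed
qed simp

lemma prefix_count_in_Suc:
  "i < length w \<Longrightarrow> prefix_count_in w A (Suc i) =
      prefix_count_in w A i + (if w ! i \<in> A then 1 else 0)"
  by (simp add: prefix_count_in_def take_Suc_conv_app_nth)

lemma prefix_count_in_mono:
  "i \<le> i' \<Longrightarrow> prefix_count_in w A i \<le> prefix_count_in w A i'"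
proof -
  assume "i \<le> i'"
  then obtain d where "i' = i + d" using le_Suc_ex by blast
  then have "take i' w = take i w @ take d (drop i w)" by (simp add: take_add)
  then show ?thesis by (simp add: prefix_count_in_def)
qed

lemma count_list_filter_mem:
  "z \<in> A \<Longrightarrow> count_list (filter (\<lambda>z. z \<in> A) w) z = count_list w z"
  by (induction w) auto

lemma prefix_count_in_eq_sum:
  "finite A \<Longrightarrow> prefix_count_in w A i = (\<Sum>a\<in>A. prefix_count w a i)"
proof -
  assume "finite A"
  then have "length (filter (\<lambda>z. z \<in> A) (take i w)) =
      (\<Sum>a\<in>A. count_list (filter (\<lambda>z. z \<in> A) (take i w)) a)"
    using sum_count_set[of "filter (\<lambda>z. z \<in> A) (take i w)" A] by fastforce
  also have "\<dots> = (\<Sum>a\<in>A. prefix_count w a i)"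
    by (rule sum.cong) (auto simp: prefix_count_def count_list_filter_mem)
  finally show ?thesis by (simp add: prefix_count_in_def)
qed

definition alternates_from :: "'a list \<Rightarrow> 'a \<Rightarrow> 'a \<Rightarrow> bool" where
  "alternates_from w x y \<longleftrightarrow> (\<forall>i<length w.
     (w ! i = x \<longrightarrow> prefix_count w y i = prefix_count w x i) \<and>
     (w ! i = y \<longrightarrow> prefix_count w x i = Suc (prefix_count w y i)))"

lemma alternates_from_Cons:
  assumes "x \<noteq> y"
  shows "alternates_from (z # w) x y \<longleftrightarrow>
    (if z = x then alternates_from w y x else if z = y then False else alternates_from w x y)"
  using assms unfolding alternates_from_def by (auto simp: All_less_Suc2)

lemma alternates_from_iff:
  "x \<noteq> y \<Longrightarrow> alternates_from w x y \<longleftrightarrow> alternate w x y \<and>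
    (filter (\<lambda>z. z = x \<or> z = y) w = [] \<or> hd (filter (\<lambda>z. z = x \<or> z = y) w) = x)"
proof (induction w arbitrary: x y)
  case Nil
  then show ?case by (simp add: alternates_from_def alternate_iff_successively)
next
  case (Cons z w)
  have swap: "(\<lambda>z. z = y \<or> z = x) = (\<lambda>z. z = x \<or> z = y)" by auto
  show ?case
    using Cons.prems Cons.IH[of x y] Cons.IH[of y x]
      hd_filter_satisfies[of "\<lambda>z. z = x \<or> z = y" w]
    by (auto simp: alternates_from_Cons alternate_iff_successively successively_Cons swap)
qed

lemma alternate_iff_alternates_from:
  "x \<noteq> y \<Longrightarrow> alternate w x y \<longleftrightarrow> alternates_from w x y \<or> alternates_from w y x"
proof -
  assume xy: "x \<noteq> y"
  have swap: "(\<lambda>z. z = y \<or> z = x) = (\<lambda>z. z = x \<or> z = y)" by auto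
  have "alternate w y x = alternate w x y"
    by (simp add: alternate_iff_successively swap)
  then show ?thesis
    using alternates_from_iff[OF xy, of w] alternates_from_iff[OF xy[symmetric], of w]
      hd_filter_satisfies[of "\<lambda>z. z = x \<or> z = y" w] by (auto simp: swap)
qed

lemma distinct_imp_successively_neq: "distinct u \<Longrightarrow> successively (\<noteq>) u"
  by (induction u rule: induct_list012) auto

lemma distinct_set_singleton: "distinct u \<Longrightarrow> set u = {x} \<Longrightarrow> u = [x]"
proof (cases u)
  case (Cons a u')
  assume "distinct u" "set u = {x}"
  then show ?thesis using Cons by (cases u') auto
qed auto

section \<open>Uniform representations\<close>

fun first_occurrences :: "'a list \<Rightarrow> 'a list" where
  "first_occurrences [] = []"
| "first_occurrences (a # u) = a # removeAll a (first_occurrences u)"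

lemma set_first_occurrences [simp]: "set (first_occurrences u) = set u"
  by (induction u) auto

lemma distinct_first_occurrences [simp]: "distinct (first_occurrences u)"
  by (induction u) (auto simp: distinct_removeAll)

lemma filter_removeAll:
  "filter P (removeAll a xs) = (if P a then removeAll a (filter P xs) else filter P xs)"
  by (induction xs) auto

lemma filter_first_occurrences: "filter P (first_occurrences u) = first_occurrences (filter P u)"
  by (induction u) (auto simp: filter_removeAll)

lemma hd_first_occurrences: "u \<noteq> [] \<Longrightarrow> hd (first_occurrences u) = hd u"
  by (cases u) auto

lemma last_first_occurrences_two_letters:
  assumes "set u = {x, y}" "x \<noteq> y"
  shows "last (first_occurrences u) \<noteq> hd (first_occurrences u)"
proof -
  have "distinct (first_occurrences u)" "set (first_occurrences u) = {x, y}" using assms by auto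
  then have "length (first_occurrences u) = 2" using assms distinct_card by fastforce
  then obtain a b where "first_occurrences u = [a, b]"
    by (metis One_nat_def Suc_1 length_0_conv length_Suc_conv)
  then show ?thesis using \<open>distinct (first_occurrences u)\<close> by auto
qed

lemma count_list_successively_neq_two_letters:
  "successively (\<noteq>) u \<Longrightarrow> set u \<subseteq> {x, y} \<Longrightarrow> u \<noteq> [] \<Longrightarrow> hd u = x \<Longrightarrow> x \<noteq> y \<Longrightarrow>
    count_list u y \<le> count_list u x \<and> count_list u x \<le> count_list u y + 1"
proof (induction u arbitrary: x y)
  case (Cons a u)
  show ?case
  proof (cases u)
    case (Cons b u')
    then have "b = y" using Cons.prems by auto
    have "count_list u x \<le> count_list u y \<and> count_list u y \<le> count_list u x + 1"
      using Cons.IH[of y x] Cons.prems \<open>u = b # u'\<close> \<open>b = y\<close> by auto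
    then show ?thesis using Cons.prems by auto
  qed (use Cons in auto)
qed simp

lemma hd_filter_alternate_more_frequent:
  assumes alt: "alternate w x y" and xy: "x \<noteq> y" and less: "count_list w x < count_list w y"
  shows "hd (filter (\<lambda>z. z = x \<or> z = y) w) = y"
proof (rule ccontr)
  let ?u = "filter (\<lambda>z. z = x \<or> z = y) w"
  have counts: "count_list ?u z = count_list w z" if "z = x \<or> z = y" for z
    using that by (induction w) auto
  have "y \<in> set w" using less count_notin by fastforce
  then have ne: "?u \<noteq> []" by (metis (mono_tags, lifting) filter_empty_conv)
  assume "hd ?u \<noteq> y"
  then have "hd ?u = x" using hd_filter_satisfies[OF ne] by blast
  then have "count_list ?u y \<le> count_list ?u x"
    using count_list_successively_neq_two_letters[of ?u x y] alt ne xy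
    by (auto simp: alternate_iff_successively)
  then show False using less counts[of x] counts[of y] by simp
qed

lemma alternate_prepend_first_occurrences:
  assumes xy: "x \<noteq> y" and x: "x \<in> set w" and y: "y \<in> set w"
    and rarer: "\<And>z z'. z \<in> A \<Longrightarrow> z' \<in> set w \<Longrightarrow> z' \<notin> A \<Longrightarrow> count_list w z < count_list w z'"
  shows "alternate (filter (\<lambda>z. z \<in> A) (first_occurrences w) @ w) x y \<longleftrightarrow> alternate w x y"
proof
  let ?F = "filter (\<lambda>z. z = x \<or> z = y)"
  let ?p = "filter (\<lambda>z. z \<in> A) (first_occurrences w)"
  assume alt: "alternate w x y"
  have Fp: "?F ?p = filter (\<lambda>z. z \<in> A) (first_occurrences (?F w))"
    by (simp add: filter_first_occurrences[symmetric] filter_filter conj_commute)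
  have Fw: "set (?F w) = {x, y}" "?F w \<noteq> []"
    using x y by (auto simp: filter_empty_conv)
  have "successively (\<noteq>) (?F ?p)" by (rule distinct_imp_successively_neq) simp
  moreover have "?F ?p = [] \<or> last (?F ?p) \<noteq> hd (?F w)"
  proof (cases "x \<in> A"; cases "y \<in> A")
    assume "x \<in> A" "y \<in> A"
    then have "?F ?p = first_occurrences (?F w)" using Fp Fw by (auto simp: filter_id_conv)
    then show ?thesis
      using last_first_occurrences_two_letters[OF Fw(1) xy] hd_first_occurrences[OF Fw(2)] by auto
  next
    assume A: "x \<in> A" "y \<notin> A"
    then have "?F ?p = [x]" using Fp Fw by (intro distinct_set_singleton) auto
    moreover have "hd (?F w) = y" using hd_filter_alternate_more_frequent[OF alt xy] rarer A y
      by blast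
    ultimately show ?thesis using xy by simp
  next
    assume A: "x \<notin> A" "y \<in> A"
    then have "?F ?p = [y]" using Fp Fw by (intro distinct_set_singleton) auto
    moreover have "hd (?F w) = x"
      using hd_filter_alternate_more_frequent[of w y x] alt xy rarer A x
      by (simp add: alternate_iff_successively disj_commute)
    ultimately show ?thesis using xy by simp
  next
    assume "x \<notin> A" "y \<notin> A"
    then show ?thesis using Fp Fw by auto
  qed
  ultimately show "alternate (?p @ w) x y"
    using alt by (auto simp: alternate_iff_successively successively_append_iff)
qed (simp add: alternate_iff_successively successively_append_iff)

lemma count_list_distinct:
  "distinct u \<Longrightarrow> count_list u z = (if z \<in> set u then 1 else 0)"
  by (induction u) auto

lemma count_list_filter_first_occurrences:
  "count_list (filter (\<lambda>z. z \<in> A) (first_occurrences w)) z =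
      (if z \<in> A \<and> z \<in> set w then 1 else 0)"
  by (subst count_list_distinct) auto

lemma represents_prepend_first_occurrences:
  assumes rep: "represents w V E"
    and rarer: "\<And>z z'. z \<in> A \<Longrightarrow> z' \<in> V \<Longrightarrow> z' \<notin> A \<Longrightarrow> count_list w z < count_list w z'"
  shows "represents (filter (\<lambda>z. z \<in> A) (first_occurrences w) @ w) V E"
proof -
  have "set w = V" using rep by (simp add: represents_def)
  then show ?thesis
    using rep alternate_prepend_first_occurrences[of _ _ w A] rarer by (auto simp: represents_def)
qed

lemma exists_uniform_representation:
  assumes "represents w V E"
  shows "\<exists>w'. represents w' V E \<and> (\<forall>z\<in>V. count_list w' z = length w)"
proof -
  have "\<exists>w'. represents w' V E \<and> (\<forall>z\<in>V. count_list w' z = M)"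
    if "represents w V E" "\<forall>z\<in>V. count_list w z \<le> M" for w and M :: nat
    using that
  proof (induction "\<Sum>z\<in>V. M - count_list w z" arbitrary: w rule: less_induct)
    case less
    have finV: "finite V" and setw: "set w = V" using less.prems(1) by (auto simp: represents_def)
    define A where "A = {z\<in>V. count_list w z < M}"
    show ?case
    proof (cases "A = {}")
      case True
      then show ?thesis using less.prems unfolding A_def by force
    next
      case False
      define w' where "w' = filter (\<lambda>z. z \<in> A) (first_occurrences w) @ w"
      have rep': "represents w' V E"
        unfolding w'_def using less.prems
        by (intro represents_prepend_first_occurrences) (auto simp: A_def)
      have count': "count_list w' z = count_list w z + (if z \<in> A then 1 else 0)"
        if "z \<in> V" for z
        using that setw by (simp add: w'_def count_list_filter_first_occurrences)
      have "(\<Sum>z\<in>V. M - count_list w' z) < (\<Sum>z\<in>V. M - count_list w z)"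
      proof (rule sum_strict_mono_ex1[OF finV])
        show "\<forall>z\<in>V. M - count_list w' z \<le> M - count_list w z" using count' by auto
        show "\<exists>z\<in>V. M - count_list w' z < M - count_list w z"
          using False count' unfolding A_def by fastforce
      qed
      moreover have "\<forall>z\<in>V. count_list w' z \<le> M" using count' less.prems(2)
        unfolding A_def by auto
      ultimately show ?thesis using less.hyps rep' by blast
    qed
  qed
  then show ?thesis using assms by (simp add: count_le_length)
qed

section \<open>Words read off from sorted keys\<close>

definition separated_repeats :: "('a \<Rightarrow> bool) \<Rightarrow> 'a list \<Rightarrow> bool" where
  "separated_repeats P w \<longleftrightarrow> (\<forall>i j. i < j \<longrightarrow> j < length w \<longrightarrow> w!i = w!j \<longrightarrow> P (w!i) \<longrightarrow>
     (\<exists>k. i < k \<and> k < j \<and> P (w!k) \<and> w!k \<noteq> w!i))"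

lemma preceded_by_other_iff:
  assumes "P z"
  shows "(\<forall>j<length w. w!j = z \<longrightarrow> (\<exists>k<j. P (w!k) \<and> w!k \<noteq> z)) \<longleftrightarrow>
    (filter P w = [] \<or> hd (filter P w) \<noteq> z)"
proof (induction w)
  case (Cons a w)
  have "(\<forall>j<length (a#w). (a#w)!j = z \<longrightarrow> (\<exists>k<j. P ((a#w)!k) \<and> (a#w)!k \<noteq> z)) \<longleftrightarrow>
    a \<noteq> z \<and> (P a \<or> (\<forall>j<length w. w!j = z \<longrightarrow> (\<exists>k<j. P (w!k) \<and> w!k \<noteq> z)))"
    by (auto simp: All_less_Suc2 Ex_less_Suc2)
  then show ?case using Cons assms by auto
qed simp

lemma separated_repeats_ConsD:
  assumes h: "separated_repeats P (a # w)"
  shows "separated_repeats P w"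
    and "P a \<Longrightarrow> \<forall>j<length w. w!j = a \<longrightarrow> (\<exists>k<j. P (w!k) \<and> w!k \<noteq> a)"
proof -
  show "separated_repeats P w" unfolding separated_repeats_def
  proof (intro allI impI)
    fix i j assume a: "i < j" "j < length w" "w!i = w!j" "P (w!i)"
    then obtain k where k: "Suc i < k" "k < Suc j" "P ((a#w)!k)" "(a#w)!k \<noteq> (a#w)!Suc i"
      using h unfolding separated_repeats_def by (metis Suc_mono length_Cons nth_Cons_Suc)
    then obtain k' where "k = Suc k'" by (cases k) auto
    then show "\<exists>k. i < k \<and> k < j \<and> P (w!k) \<and> w!k \<noteq> w!i" using k by auto
  qed
next
  assume Pa: "P a"
  show "\<forall>j<length w. w!j = a \<longrightarrow> (\<exists>k<j. P (w!k) \<and> w!k \<noteq> a)"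
  proof (intro allI impI)
    fix j assume j: "j < length w" "w!j = a"
    then obtain k where k: "0 < k" "k < Suc j" "P ((a#w)!k)" "(a#w)!k \<noteq> (a#w)!0"
      using h Pa unfolding separated_repeats_def
      by (metis length_Cons not_less_eq nth_Cons_0 nth_Cons_Suc zero_less_Suc)
    then obtain k' where "k = Suc k'" by (cases k) auto
    then show "\<exists>k<j. P (w!k) \<and> w!k \<noteq> a" using k by auto
  qed
qed

lemma separated_repeats_ConsI:
  assumes sep: "separated_repeats P w"
    and first: "P a \<Longrightarrow> \<forall>j<length w. w!j = a \<longrightarrow> (\<exists>k<j. P (w!k) \<and> w!k \<noteq> a)"
  shows "separated_repeats P (a # w)"
  unfolding separated_repeats_def
proof (intro allI impI)
  fix i j assume a: "i < j" "j < length (a#w)" "(a#w)!i = (a#w)!j" "P ((a#w)!i)"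
  obtain j' where j': "j = Suc j'" using a(1) by (cases j) auto
  show "\<exists>k. i < k \<and> k < j \<and> P ((a#w)!k) \<and> (a#w)!k \<noteq> (a#w)!i"
  proof (cases i)
    case 0
    then have "P a" "w!j' = a" "j' < length w" using a j' by auto
    then obtain k where "k < j'" "P (w!k)" "w!k \<noteq> a" using first by blast
    then show ?thesis using 0 j' by (intro exI[of _ "Suc k"]) auto
  next
    case (Suc i')
    then have "i' < j'" "j' < length w" "w!i' = w!j'" "P (w!i')" using a j' by auto
    then obtain k where "i' < k" "k < j'" "P (w!k)" "w!k \<noteq> w!i'"
      using sep unfolding separated_repeats_def by blast
    then show ?thesis using Suc j' by (intro exI[of _ "Suc k"]) auto
  qed
qed

lemma separated_repeats_Cons:
  "separated_repeats P (a # w) \<longleftrightarrow> separated_repeats P w \<and>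
    (P a \<longrightarrow> (\<forall>j<length w. w!j = a \<longrightarrow> (\<exists>k<j. P (w!k) \<and> w!k \<noteq> a)))"
proof (intro iffI conjI impI)
  assume h: "separated_repeats P (a # w)"
  show "separated_repeats P w" using separated_repeats_ConsD(1)[OF h] .
  show "\<forall>j<length w. w!j = a \<longrightarrow> (\<exists>k<j. P (w!k) \<and> w!k \<noteq> a)" if "P a"
    using separated_repeats_ConsD(2)[OF h that] .
next
  assume "separated_repeats P w \<and> (P a \<longrightarrow> (\<forall>j<length w. w!j = a \<longrightarrow> (\<exists>k<j. P (w!k) \<and> w!k \<noteq> a)))"
  then show "separated_repeats P (a # w)" by (intro separated_repeats_ConsI) auto
qed

lemma successively_neq_filter_iff:
  "successively (\<noteq>) (filter P w) \<longleftrightarrow> separated_repeats P w"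
proof (induction w)
  case Nil
  then show ?case by (simp add: separated_repeats_def)
next
  case (Cons a w)
  show ?case
  proof (cases "P a")
    case True
    have e1: "successively (\<noteq>) (filter P (a#w)) \<longleftrightarrow>
        (filter P w = [] \<or> a \<noteq> hd (filter P w) \<and> successively (\<noteq>) (filter P w))"
      using True by (simp add: successively_Cons)
    have e2: "separated_repeats P (a#w) \<longleftrightarrow> separated_repeats P w \<and>
        (filter P w = [] \<or> hd (filter P w) \<noteq> a)"
      using separated_repeats_Cons[of P a w] preceded_by_other_iff[of P a w] True by simp
    have e3: "filter P w = [] \<Longrightarrow> separated_repeats P w" using Cons.IH by simp
    show ?thesis using e1 e2 e3 Cons.IH by blast
  next
    case False
    then show ?thesis using Cons by (simp add: separated_repeats_Cons)
  qed
qed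

lemma alternate_iff_separated_repeats:
  "alternate w x y \<longleftrightarrow> separated_repeats (\<lambda>z. z = x \<or> z = y) w"
  by (simp add: alternate_iff_successively successively_neq_filter_iff)

lemma sorted_wrt_less_nth_less_iff:
  fixes xs :: "'k::linorder list"
  assumes "sorted_wrt (<) xs" "i < length xs" "j < length xs"
  shows "xs ! i < xs ! j \<longleftrightarrow> i < j"
proof
  assume lt: "xs ! i < xs ! j"
  show "i < j"
  proof (rule ccontr)
    assume "\<not> i < j"
    then consider "i = j" | "j < i" by linarith
    then show False using lt sorted_wrt_nth_less[OF assms(1), of j i] assms(2) by cases auto
  qed
qed (use sorted_wrt_nth_less[OF assms(1)] assms(3) in blast)

definition keys_of :: "('k \<times> 'a) list \<Rightarrow> 'a \<Rightarrow> 'k set" where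
  "keys_of S x = {k. (k, x) \<in> set S}"

definition separated_by :: "'k::linorder set \<Rightarrow> 'k set \<Rightarrow> bool" where
  "separated_by A B \<longleftrightarrow> (\<forall>a\<in>A. \<forall>a'\<in>A. a < a' \<longrightarrow> (\<exists>b\<in>B. a < b \<and> b < a'))"

lemma keys_of_nth: "k \<in> keys_of S x \<longleftrightarrow> (\<exists>i<length S. S ! i = (k, x))"
  unfolding keys_of_def in_set_conv_nth by blast

lemma separated_by_if_separated_repeats:
  fixes S :: "('k::linorder \<times> 'a) list"
  assumes sorted: "sorted_wrt (<) (map fst S)" and sep: "separated_repeats P (map snd S)"
    and uv: "u \<noteq> v" "P u" and P: "\<And>z. P z \<Longrightarrow> z = u \<or> z = v"
  shows "separated_by (keys_of S u) (keys_of S v)"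
  unfolding separated_by_def
proof (intro ballI impI)
  fix a a' assume a: "a \<in> keys_of S u" "a' \<in> keys_of S u" "a < a'"
  obtain i where i: "i < length S" "S ! i = (a, u)" using a(1) unfolding keys_of_nth by blast
  obtain j where j: "j < length S" "S ! j = (a', u)" using a(2) unfolding keys_of_nth by blast
  have ord: "fst (S ! i') < fst (S ! j') \<longleftrightarrow>
      i' < j'" if "i' < length S" "j' < length S" for i' j'
    using sorted_wrt_less_nth_less_iff[OF sorted] that by simp
  have "i < j" using ord[OF i(1) j(1)] i(2) j(2) a(3) by simp
  then have "\<exists>k. i < k \<and> k < j \<and> P (map snd S ! k) \<and>
      map snd S ! k \<noteq> map snd S ! i"
    using sep[unfolded separated_repeats_def, rule_format, of i j] i j uv(2) by simp
  then obtain k where k: "i < k" "k < j" "P (snd (S ! k))" "snd (S ! k) \<noteq> u"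
    using i j by auto
  have kS: "k < length S" using k j by simp
  have "snd (S ! k) = v" using k(3,4) P by blast
  then have "S ! k = (fst (S ! k), v)" by (cases "S ! k") simp
  then have "fst (S ! k) \<in> keys_of S v" using kS unfolding keys_of_nth by blast
  moreover have "a < fst (S ! k)" "fst (S ! k) < a'"
    using ord[OF i(1) kS] ord[OF kS j(1)] k(1,2) i(2) j(2) by auto
  ultimately show "\<exists>b\<in>keys_of S v. a < b \<and> b < a'" by blast
qed

lemma separated_repeats_if_separated_by:
  fixes S :: "('k::linorder \<times> 'a) list"
  assumes sorted: "sorted_wrt (<) (map fst S)" and xy: "x \<noteq> y"
    and sep: "separated_by (keys_of S x) (keys_of S y)" "separated_by (keys_of S y) (keys_of S x)"
  shows "separated_repeats (\<lambda>z. z = x \<or> z = y) (map snd S)"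
  unfolding separated_repeats_def
proof (intro allI impI)
  fix i j assume a: "i < j" "j < length (map snd S)" "map snd S ! i = map snd S ! j"
    "map snd S ! i = x \<or> map snd S ! i = y"
  have ord: "fst (S ! i') < fst (S ! j') \<longleftrightarrow>
      i' < j'" if "i' < length S" "j' < length S" for i' j'
    using sorted_wrt_less_nth_less_iff[OF sorted] that by simp
  have iS: "i < length S" and jS: "j < length S" using a by auto
  define u where "u = snd (S ! i)"
  define v where "v = (if u = x then y else x)"
  have uv: "u \<noteq> v" "v = x \<or> v = y" using a(4) iS xy unfolding u_def v_def by auto
  have "S ! i = (fst (S ! i), u)" "S ! j = (fst (S ! j), u)"
    using a(3) iS jS unfolding u_def by (cases "S ! i", cases "S ! j", simp)+
  then have "fst (S ! i) \<in> keys_of S u" "fst (S ! j) \<in> keys_of S u"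
    using iS jS unfolding keys_of_nth by blast+
  moreover have "separated_by (keys_of S u) (keys_of S v)"
    using sep a(4) iS xy unfolding u_def v_def by auto
  moreover have "fst (S ! i) < fst (S ! j)" using ord[OF iS jS] a(1) by simp
  ultimately obtain b where b: "b \<in> keys_of S v" "fst (S ! i) < b" "b < fst (S ! j)"
    unfolding separated_by_def by blast
  then obtain k where k: "k < length S" "S ! k = (b, v)" unfolding keys_of_nth by blast
  have "i < k" "k < j" using ord[OF iS k(1)] ord[OF k(1) jS] b k by auto
  then show "\<exists>k. i < k \<and> k < j \<and>
      (map snd S ! k = x \<or> map snd S ! k = y) \<and> map snd S ! k \<noteq> map snd S ! i"
    using k uv iS unfolding u_def by (intro exI[of _ k]) auto
qed

definition word_of_keys :: "('k::linorder \<times> 'a) list \<Rightarrow> 'a list" where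
  "word_of_keys Ps = map snd (sort_key fst Ps)"

lemma set_word_of_keys: "set (word_of_keys Ps) = snd ` set Ps"
  by (simp add: word_of_keys_def)

lemma count_list_word_of_keys: "count_list (word_of_keys Ps) x = count_list (map snd Ps) x"
proof -
  have "mset (word_of_keys Ps) = mset (map snd Ps)" by (simp add: word_of_keys_def)
  then show ?thesis by (rule mset_eq_length_filter)
qed

lemma alternate_word_of_keys_iff:
  fixes Ps :: "('k::linorder \<times> 'a) list"
  assumes dk: "distinct (map fst Ps)" and xy: "x \<noteq> y"
  shows "alternate (word_of_keys Ps) x y \<longleftrightarrow>
    separated_by (keys_of Ps x) (keys_of Ps y) \<and> separated_by (keys_of Ps y) (keys_of Ps x)"
proof -
  define S where "S = sort_key fst Ps"
  have "mset (map fst S) = mset (map fst Ps)" by (simp add: S_def)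
  then have "distinct (map fst S)" using dk mset_eq_imp_distinct_iff by blast
  then have sorted: "sorted_wrt (<) (map fst S)" by (simp add: S_def strict_sorted_iff)
  have keys: "keys_of S = keys_of Ps" by (simp add: S_def keys_of_def fun_eq_iff)
  have "alternate (word_of_keys Ps) x y \<longleftrightarrow>
      separated_repeats (\<lambda>z. z = x \<or> z = y) (map snd S)"
    by (simp add: word_of_keys_def S_def alternate_iff_separated_repeats)
  then show ?thesis
    using separated_by_if_separated_repeats[OF sorted, of "\<lambda>z. z = x \<or> z = y" x y]
      separated_by_if_separated_repeats[OF sorted, of "\<lambda>z. z = x \<or> z = y" y x]
      separated_repeats_if_separated_by[OF sorted xy] xy keys by auto
qed

definition alternating3 :: "'k::linorder \<Rightarrow> 'k \<Rightarrow> 'k \<Rightarrow> 'k \<Rightarrow> 'k \<Rightarrow> 'k \<Rightarrow> bool" where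
  "alternating3 a1 a2 a3 b1 b2 b3 \<longleftrightarrow>
      (a1<b1 \<and> b1<a2 \<and> a2<b2 \<and> b2<a3 \<and> a3<b3) \<or> (b1<a1 \<and> a1<b2 \<and> b2<a2 \<and> a2<b3 \<and> b3<a3)"

lemma alternating3_sym:
  "alternating3 a1 a2 a3 b1 b2 b3 \<longleftrightarrow> alternating3 b1 b2 b3 a1 a2 a3"
  unfolding alternating3_def by blast

lemma alternating3_if_first_less:
  fixes a1 a2 a3 b1 b2 b3 :: "'k::linorder"
  assumes o: "a1 < a2" "a2 < a3" "b1 < b2" "b2 < b3"
    and b: "separated_by {a1,a2,a3} {b1,b2,b3}" "separated_by {b1,b2,b3} {a1,a2,a3}"
    and a1b1: "a1 < b1"
  shows "a1<b1 \<and> b1<a2 \<and> a2<b2 \<and> b2<a3 \<and> a3<b3"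
proof -
  obtain x1 where x1: "x1 \<in> {b1,b2,b3}" "a1 < x1" "x1 < a2" using b(1) o
    unfolding separated_by_def by blast
  have e1: "b1 < a2" using x1 o by auto
  obtain y1 where y1: "y1 \<in> {a1,a2,a3}" "b1 < y1" "y1 < b2" using b(2) o
    unfolding separated_by_def by blast
  have e2: "a2 < b2" using y1 o a1b1 by auto
  obtain x2 where x2: "x2 \<in> {b1,b2,b3}" "a2 < x2" "x2 < a3" using b(1) o
    unfolding separated_by_def by blast
  have e3: "b2 < a3" using x2 o e1 by auto
  obtain y2 where y2: "y2 \<in> {a1,a2,a3}" "b2 < y2" "y2 < b3" using b(2) o
    unfolding separated_by_def by blast
  have e4: "a3 < b3" using y2 o e2 a1b1 by auto
  show ?thesis using a1b1 e1 e2 e3 e4 by simp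
qed

lemma separated_by_iff_alternating3:
  fixes a1 a2 a3 b1 b2 b3 :: "'k::linorder"
  assumes o: "a1 < a2" "a2 < a3" "b1 < b2" "b2 < b3" and d: "a1 \<noteq> b1"
  shows "separated_by {a1,a2,a3} {b1,b2,b3} \<and>
      separated_by {b1,b2,b3} {a1,a2,a3} \<longleftrightarrow> alternating3 a1 a2 a3 b1 b2 b3"
proof
  assume b: "separated_by {a1,a2,a3} {b1,b2,b3} \<and> separated_by {b1,b2,b3} {a1,a2,a3}"
  show "alternating3 a1 a2 a3 b1 b2 b3"
  proof (cases "a1 < b1")
    case True
    then show ?thesis using alternating3_if_first_less[OF o] b unfolding alternating3_def by blast
  next
    case False
    then have "b1 < a1" using d by auto
    then have "b1<a1 \<and> a1<b2 \<and> b2<a2 \<and> a2<b3 \<and> b3<a3"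
      using alternating3_if_first_less[OF o(3,4,1,2)] b by blast
    then show ?thesis unfolding alternating3_def by blast
  qed
next
  assume "alternating3 a1 a2 a3 b1 b2 b3"
  then show "separated_by {a1,a2,a3} {b1,b2,b3} \<and> separated_by {b1,b2,b3} {a1,a2,a3}"
    unfolding alternating3_def separated_by_def using o by auto
qed

lemma distinct_concat_map:
  assumes "distinct xs" "\<And>v. v \<in> set xs \<Longrightarrow> distinct (f v)"
    "\<And>v v'. v \<in> set xs \<Longrightarrow> v' \<in> set xs \<Longrightarrow>
        v \<noteq> v' \<Longrightarrow> set (f v) \<inter> set (f v') = {}"
  shows "distinct (concat (map f xs))"
  using assms
proof (induction xs)
  case Nil
  then show ?case by simp
next
  case (Cons a xs)
  have "set (f a) \<inter> set (concat (map f xs)) = {}"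
    using Cons.prems(1,3) by fastforce
  then show ?case using Cons by simp
qed

lemma count_list_concat_triples:
  "count_list (concat (map (\<lambda>v. [v, v, v]) xs)) z = 3 * count_list xs z"
  by (induction xs) auto

section \<open>Phases in a uniform representation of a split graph\<close>

lemma not_Ints_add_Ints: "(a::real) \<notin> \<int> \<Longrightarrow> b \<in> \<int> \<Longrightarrow> a + b \<notin> \<int>"
  by (metis Ints_diff add_diff_cancel_right')

lemma Ints_add_not_Ints: "(b::real) \<in> \<int> \<Longrightarrow> a \<notin> \<int> \<Longrightarrow> b + a \<notin> \<int>"
  using not_Ints_add_Ints by (metis add.commute)

locale split_uniform_rep =
  fixes w :: "'a list" and V :: "'a set" and E :: "'a \<Rightarrow> 'a \<Rightarrow> bool"
    and K I :: "'a set" and m :: nat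
  assumes rep: "represents w V E"
    and unif: "\<forall>z\<in>V. count_list w z = m"
    and sg: "simple_graph V E"
    and KI: "K \<union> I = V" "K \<inter> I = {}"
    and cl: "is_clique E K" and ind: "is_independent E I"
    and Kne: "K \<noteq> {}"
begin

abbreviation "L \<equiv> length w"
abbreviation "n \<equiv> card K"

text \<open>The clique letter at index \<open>i\<close> gets the position \<open>c\<close>, where \<open>c\<close> clique letters precede it;
  other letters get positions in \<open>(c - 1, c)\<close>, strictly increasing with \<open>i\<close>, and above \<open>-1/2\<close>
  before the first clique letter. Their fractional parts are pairwise distinct.\<close>

definition jitter :: "nat \<Rightarrow> real" where
  "jitter i = real (Suc i) / real (2*L+2) + (if prefix_count_in w K i = 0 then 1/2 else 0)"

definition position :: "nat \<Rightarrow> real" where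
  "position i = (if w ! i \<in> K then real (prefix_count_in w K i)
     else real (prefix_count_in w K i) - 1 + jitter i)"

definition phase :: "nat \<Rightarrow> real" where
  "phase i = position i - real n * real (prefix_count w (w ! i) i)"

text \<open>\<open>r\<close> lies on the open arc from \<open>a\<close> to \<open>b\<close> of the circle \<open>\<real> / n\<int>\<close>.\<close>
abbreviation on_arc :: "real \<Rightarrow> real \<Rightarrow> real \<Rightarrow> bool" where
  "on_arc a b r \<equiv> \<exists>c::int. a < r + of_int c * real n \<and> r + of_int c * real n < b"

lemma set_w: "set w = V" using rep by (simp add: represents_def)
lemma finite_V: "finite V" using set_w by auto
lemma finite_K: "finite K" using finite_V KI by auto
lemma card_K_pos: "n \<ge> 1" using finite_K Kne by (simp add: Suc_leI card_gt_0_iff)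
lemma card_K_real_pos: "real n > 0" using card_K_pos by simp

lemma m_pos: "m \<ge> 1"
proof -
  obtain k where "k \<in> K" using Kne by auto
  then have "k \<in> set w" using set_w KI by auto
  then have "count_list w k \<ge> 1" using count_list_0_iff[of w k] by (cases "count_list w k") auto
  then show ?thesis using unif \<open>k \<in> set w\<close> set_w by auto
qed

lemma nth_in_V: "i < L \<Longrightarrow> w ! i \<in> V" using set_w nth_mem by blast

lemma prefix_count_in_length: "prefix_count_in w K L = n * m"
proof -
  have "prefix_count_in w K L = (\<Sum>k\<in>K. prefix_count w k L)"
    by (rule prefix_count_in_eq_sum[OF finite_K])
  also have "\<dots> = (\<Sum>k\<in>K. m)" using unif KI
    by (intro sum.cong) (auto simp: prefix_count_length)
  finally show ?thesis by simp
qed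

lemma prefix_count_in_le: "prefix_count_in w K i \<le> n * m"
  using prefix_count_in_mono[of i L w K] prefix_count_in_length
  by (cases "i \<le> L") (auto simp: prefix_count_in_def)

lemma prefix_count_in_clique_less:
  "i < L \<Longrightarrow> w ! i \<in> K \<Longrightarrow> prefix_count_in w K i + 1 \<le> n * m"
  using prefix_count_in_Suc[of i w K] prefix_count_in_le[of "Suc i"] by simp

lemma jitter_bounds:
  "i < L \<Longrightarrow> 0 < jitter i \<and> jitter i < 1 \<and>
      (prefix_count_in w K i = 0 \<longrightarrow> jitter i > 1/2) \<and> (prefix_count_in w K i \<noteq> 0 \<longrightarrow> jitter i < 1/2)"
proof -
  assume iL: "i < L"
  have a: "real (Suc i) / real (2*L+2) < 1/2"
    using iL by (simp add: divide_less_eq)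
  have b: "real (Suc i) / real (2*L+2) > 0" by simp
  define q where "q = real (Suc i) / real (2*L+2)"
  have "jitter i = q + (if prefix_count_in w K i = 0 then 1/2 else 0)" unfolding jitter_def q_def
    by simp
  then show ?thesis using a b unfolding q_def[symmetric] by auto
qed

lemma jitter_inj:
  "i < L \<Longrightarrow> i' < L \<Longrightarrow> jitter i = jitter i' \<Longrightarrow> i = i'"
proof -
  assume iL: "i < L" and i'L: "i' < L" and eq: "jitter i = jitter i'"
  have s: "(prefix_count_in w K i = 0) = (prefix_count_in w K i' = 0)"
    using jitter_bounds[OF iL] jitter_bounds[OF i'L] eq by force
  then have "real (Suc i) / real (2*L+2) = real (Suc i') / real (2*L+2)"
    using eq unfolding jitter_def by (auto split: if_splits)
  then have "real (Suc i) = real (Suc i')" by (simp add: divide_cancel_right)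
  then show "i = i'" by simp
qed

lemma position_less_Suc: "Suc i < L \<Longrightarrow> position i < position (Suc i)"
proof -
  assume SL: "Suc i < L"
  then have iL: "i < L" by simp
  have ks: "prefix_count_in w K (Suc i) = prefix_count_in w K i + (if w ! i \<in> K then 1 else 0)"
    using prefix_count_in_Suc[OF iL] .
  note f1 = jitter_bounds[OF iL] and f2 = jitter_bounds[OF SL]
  show ?thesis
  proof (cases "w ! i \<in> K")
    case True
    then show ?thesis using ks f2 unfolding position_def by auto
  next
    case False
    then have ks': "prefix_count_in w K (Suc i) = prefix_count_in w K i" using ks by simp
    show ?thesis
    proof (cases "w ! Suc i \<in> K")
      case True
      have "jitter i < 1" using f1 by simp
      moreover have "prefix_count_in w K i = 0 \<Longrightarrow> jitter i < 1" using f1 by simp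
      ultimately show ?thesis using False True ks' unfolding position_def by auto
    next
      case F2: False
      have "jitter i < jitter (Suc i)" unfolding jitter_def using ks'
        by (auto simp: divide_strict_right_mono)
      then show ?thesis using False F2 ks' unfolding position_def by auto
    qed
  qed
qed

lemma position_strict_mono:
  "i < i' \<Longrightarrow> i' < L \<Longrightarrow> position i < position i'"
proof (induction i' arbitrary: i)
  case 0
  then show ?case by simp
next
  case (Suc i')
  show ?case
  proof (cases "i = i'")
    case True
    then show ?thesis using position_less_Suc Suc.prems by simp
  next
    case False
    then have "position i < position i'" using Suc by simp
    also have "position i' < position (Suc i')" using position_less_Suc Suc.prems by simp
    finally show ?thesis .
  qed
qed

lemma position_less_iff:
  "i < L \<Longrightarrow> i' < L \<Longrightarrow> position i < position i' \<longleftrightarrow> i < i'"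
  using position_strict_mono[of i i'] position_strict_mono[of i' i]
  by (cases "i < i'"; cases "i = i'") auto

lemma position_bounds:
  "i < L \<Longrightarrow> -1/2 < position i \<and> position i < real (n*m) - 1/2"
proof -
  assume iL: "i < L"
  note f = jitter_bounds[OF iL]
  show ?thesis
  proof (cases "w ! i \<in> K")
    case True
    have "real (prefix_count_in w K i) + 1 \<le> real (n*m)"
      using prefix_count_in_clique_less[OF iL True] by linarith
    then show ?thesis using True unfolding position_def by auto
  next
    case False
    have le: "real (prefix_count_in w K i) \<le> real (n*m)" using prefix_count_in_le[of i]
      by linarith
    have "n * m \<ge> 1" using card_K_pos m_pos by (simp add: Suc_le_eq)
    then have nm: "real (n*m) \<ge> 1" by linarith
    show ?thesis
    proof (cases "prefix_count_in w K i = 0")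
      case True
      then show ?thesis using False f nm unfolding position_def by auto
    next
      case F2: False
      then have "real (prefix_count_in w K i) \<ge> 1" by simp
      then show ?thesis using False F2 f le unfolding position_def by auto
    qed
  qed
qed

lemma edge_iff_alternate:
  "a \<in> V \<Longrightarrow> b \<in> V \<Longrightarrow> a \<noteq> b \<Longrightarrow> E a b \<longleftrightarrow> alternate w a b"
  using rep by (simp add: represents_def)

lemma clique_alternate:
  "k \<in> K \<Longrightarrow> k' \<in> K \<Longrightarrow> k \<noteq> k' \<Longrightarrow> alternate w k k'"
  using edge_iff_alternate[of k k'] cl KI unfolding is_clique_def by auto

definition clique_offset :: "'a \<Rightarrow> 'a \<Rightarrow> nat" where
  "clique_offset k k' = (if k' \<noteq> k \<and> alternates_from w k' k then 1 else 0)"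

lemma prefix_count_clique:
  assumes kK: "k \<in> K" and k'K: "k' \<in> K" and iL: "i < L" and wi: "w ! i = k"
  shows "prefix_count w k' i = prefix_count w k i + clique_offset k k'"
proof (cases "k' = k")
  case False
  then have "alternates_from w k k' \<or> alternates_from w k' k"
    using clique_alternate kK k'K alternate_iff_alternates_from by metis
  then show ?thesis
    using iL wi False unfolding clique_offset_def alternates_from_def by auto
qed (simp add: clique_offset_def)

text \<open>The number of clique vertices whose first occurrence precedes that of \<open>k\<close>.\<close>
definition clique_rank :: "'a \<Rightarrow> nat" where
  "clique_rank k = (\<Sum>k'\<in>K. clique_offset k k')"

lemma prefix_count_in_clique:
  "k \<in> K \<Longrightarrow> i < L \<Longrightarrow> w ! i = k \<Longrightarrow> prefix_count_in w K i = n * prefix_count w k i + clique_rank k"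
proof -
  assume a: "k \<in> K" "i < L" "w ! i = k"
  have "prefix_count_in w K i = (\<Sum>k'\<in>K. prefix_count w k' i)"
    by (rule prefix_count_in_eq_sum[OF finite_K])
  also have "\<dots> = (\<Sum>k'\<in>K. prefix_count w k i + clique_offset k k')"
    by (rule sum.cong[OF refl], rule prefix_count_clique[OF a(1) _ a(2,3)])
  also have "\<dots> = n * prefix_count w k i + clique_rank k"
    by (simp add: sum.distrib clique_rank_def)
  finally show ?thesis .
qed

lemma clique_rank_less: "k \<in> K \<Longrightarrow> clique_rank k < n"
proof -
  assume kK: "k \<in> K"
  have "clique_rank k = clique_offset k k + (\<Sum>k'\<in>K - {k}. clique_offset k k')"
    unfolding clique_rank_def using kK finite_K by (simp add: sum.remove)
  also have "\<dots> = (\<Sum>k'\<in>K - {k}. clique_offset k k')" by (simp add: clique_offset_def)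
  also have "\<dots> \<le> (\<Sum>k'\<in>K - {k}. 1)"
    by (intro sum_mono) (simp add: clique_offset_def)
  also have "\<dots> = n - 1" using kK finite_K by simp
  finally show ?thesis using card_K_pos by linarith
qed

lemma occurrence_with_index:
  "x \<in> V \<Longrightarrow> t < m \<Longrightarrow> \<exists>i<L. w ! i = x \<and> prefix_count w x i = t"
  using occurrence_with_prefix_count[of t w x] unif by auto

lemma clique_rank_inj:
  "k \<in> K \<Longrightarrow> k' \<in> K \<Longrightarrow> clique_rank k = clique_rank k' \<Longrightarrow> k = k'"
proof (rule ccontr)
  assume kK: "k \<in> K" and k'K: "k' \<in> K" and eq: "clique_rank k = clique_rank k'"
    and ne: "k \<noteq> k'"
  obtain i where i: "i < L" "w ! i = k" "prefix_count w k i = 0"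
    using occurrence_with_index[of k 0] m_pos kK KI by auto
  obtain i' where i': "i' < L" "w ! i' = k'" "prefix_count w k' i' = 0"
    using occurrence_with_index[of k' 0] m_pos k'K KI by auto
  have ki: "prefix_count_in w K i = clique_rank k" using prefix_count_in_clique[OF kK i(1,2)] i(3)
    by simp
  have ki': "prefix_count_in w K i' = clique_rank k'"
    using prefix_count_in_clique[OF k'K i'(1,2)] i'(3) by simp
  have "i \<noteq> i'" using i i' ne by auto
  then have "i < i' \<or> i' < i" by auto
  then show False
  proof
    assume "i < i'"
    then have "prefix_count_in w K (Suc i) \<le> prefix_count_in w K i'"
      by (intro prefix_count_in_mono) simp
    then show False using prefix_count_in_Suc[OF i(1)] i kK ki ki' eq by simp
  next
    assume "i' < i"
    then have "prefix_count_in w K (Suc i') \<le> prefix_count_in w K i"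
      by (intro prefix_count_in_mono) simp
    then show False using prefix_count_in_Suc[OF i'(1)] i' k'K ki ki' eq by simp
  qed
qed

lemma position_clique:
  "i < L \<Longrightarrow> w ! i \<in> K \<Longrightarrow>
    position i = real n * real (prefix_count w (w ! i) i) + real (clique_rank (w ! i))"
  using prefix_count_in_clique[of "w ! i" i] unfolding position_def by simp

lemma phase_clique:
  "i < L \<Longrightarrow> w ! i \<in> K \<Longrightarrow> phase i = real (clique_rank (w ! i))"
  using position_clique unfolding phase_def by simp

lemma prefix_count_less_m: "i < L \<Longrightarrow> prefix_count w (w ! i) i < m"
  using prefix_count_less_count_list[of i w "w ! i"] unif nth_in_V by auto

lemma position_eq_phase: "position i = phase i + real n * real (prefix_count w (w ! i) i)"
  unfolding phase_def by simp

lemma occurrence_order_by_phase: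
  assumes iL: "i < L" and wi: "w ! i = x" and i'L: "i' < L" and wi': "w ! i' = y"
    and h1: "phase i < phase i' + real c * real n"
    and h2: "phase i' + real c * real n < phase i + real n"
  shows "i' < i \<longleftrightarrow> prefix_count w y i' + 1 \<le> prefix_count w x i + c"
proof -
  define t where "t = prefix_count w x i"
  define s where "s = prefix_count w y i'"
  have pi: "position i = phase i + real n * real t" using position_eq_phase[of i] wi t_def by simp
  have pi': "position i' = phase i' + real n * real s" using position_eq_phase[of i'] wi' s_def
    by simp
  show ?thesis
  proof (cases "s + 1 \<le> t + c")
    case True
    then have "real n * (real s + 1) \<le> real n * (real t + real c)"
      by (intro mult_left_mono) auto
    then have "position i' < position i" using pi pi' h2 by (simp add: algebra_simps)
    then show ?thesis using True position_less_iff[OF i'L iL] s_def t_def by simp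
  next
    case False
    then have "real n * (real t + real c) \<le> real n * real s" by (intro mult_left_mono) auto
    then have "position i < position i'" using pi pi' h1 by (simp add: algebra_simps)
    then show ?thesis using False position_less_iff[OF iL i'L] s_def t_def by simp
  qed
qed

definition phase_separated :: "'a \<Rightarrow> 'a \<Rightarrow> nat \<Rightarrow> bool" where
  "phase_separated x y c \<longleftrightarrow> (\<forall>i<L. \<forall>i'<L. w ! i = x \<longrightarrow> w ! i' = y \<longrightarrow>
     phase i < phase i' + real c * real n \<and> phase i' + real c * real n < phase i + real n)"

lemma prefix_count_offset_by_phase:
  assumes xy: "x \<noteq> y" and yV: "y \<in> V" and c1: "c \<le> 1" and sep: "phase_separated x y c"
    and iL: "i < L" and wi: "w ! i = x"
  shows "prefix_count w y i = prefix_count w x i + c"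
proof -
  define t where "t = prefix_count w x i"
  define s where "s = prefix_count w y i"
  have tm: "t < m" using prefix_count_less_m[OF iL] wi t_def by simp
  have sm: "s \<le> m" using prefix_count_le_count_list[of w y i] unif yV s_def by simp
  have order: "i' < i \<longleftrightarrow> prefix_count w y i' + 1 \<le> t + c" if "i' < L" "w ! i' = y" for i'
    using sep iL wi that occurrence_order_by_phase[OF iL wi that]
    unfolding phase_separated_def t_def
    by blast
  have "t + c \<le> s" if "s < m"
  proof -
    obtain i' where i': "i' < L" "w ! i' = y" "prefix_count w y i' = s"
      using occurrence_with_index[OF yV \<open>s < m\<close>] by blast
    have "\<not> i' < i"
      using prefix_count_less_if_less[OF _ i'(1)] i'(2,3) s_def by fastforce
    then show ?thesis using order[OF i'(1,2)] i'(3) by simp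
  qed
  moreover have "s \<le> t + c" if s1: "s \<ge> 1"
  proof -
    have "s - 1 < m" using s1 sm by simp
    then obtain i' where i': "i' < L" "w ! i' = y" "prefix_count w y i' = s - 1"
      using occurrence_with_index[OF yV] by blast
    have "i' < i" using less_if_prefix_count_less[of w y i' i] i'(3) s_def s1 by simp
    then show ?thesis using order[OF i'(1,2)] i'(3) s1 by simp
  qed
  ultimately have "s = t + c" using sm tm c1 m_pos by (cases "s < m"; cases "s \<ge> 1") auto
  then show ?thesis using s_def t_def by simp
qed

lemma alternate_if_phases_separated:
  assumes xy: "x \<noteq> y" and xV: "x \<in> V" and yV: "y \<in> V" and c1: "c \<le> 1"
    and sep: "phase_separated x y c"
  shows "alternate w x y"
proof -
  have "phase_separated y x (1 - c)" unfolding phase_separated_def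
  proof (intro allI impI)
    fix i i' assume a: "i < L" "i' < L" "w ! i = y" "w ! i' = x"
    have "phase i' < phase i + real c * real n \<and> phase i + real c * real n < phase i' + real n"
      using sep a unfolding phase_separated_def by blast
    moreover have "real (1 - c) = 1 - real c" using c1 by simp
    ultimately show "phase i < phase i' + real (1 - c) * real n \<and>
        phase i' + real (1 - c) * real n < phase i + real n"
      by (simp only: left_diff_distrib) linarith
  qed
  then have cy: "\<And>i. i < L \<Longrightarrow> w ! i = y \<Longrightarrow> prefix_count w x i = prefix_count w y i + (1 - c)"
    using prefix_count_offset_by_phase[OF xy[symmetric] xV] by simp
  have cx: "\<And>i. i < L \<Longrightarrow> w ! i = x \<Longrightarrow> prefix_count w y i = prefix_count w x i + c"
    by (rule prefix_count_offset_by_phase[OF xy yV c1 sep])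
  show ?thesis
  proof (cases "c = 0")
    case True
    then have "alternates_from w x y" using cx cy unfolding alternates_from_def by auto
    then show ?thesis using alternate_iff_alternates_from[OF xy] by simp
  next
    case False
    then have "alternates_from w y x" using cx cy c1 unfolding alternates_from_def by auto
    then show ?thesis using alternate_iff_alternates_from[OF xy] by simp
  qed
qed

lemma position_less_clique_occurrence:
  assumes iL: "i < L" and kK: "k \<in> K" and wik: "w ! i \<noteq> k"
    and c: "prefix_count w k i = t" and tm: "t < m"
  shows "position i < real n * real t + real (clique_rank k)"
proof -
  obtain i' where i': "i' < L" "w ! i' = k" "prefix_count w k i' = t"
    using occurrence_with_index[of k t] kK KI tm by auto
  have "\<not> i' < i"
  proof
    assume "i' < i"
    then have "prefix_count w k i' < prefix_count w k i"
      using prefix_count_less_if_less[OF _ i'(1)] i'(2) by blast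
    then show False using i'(3) c by simp
  qed
  moreover have "i' \<noteq> i" using wik i' by auto
  ultimately have "i < i'" by simp
  then have "position i < position i'" using position_strict_mono i'(1) by blast
  then show ?thesis using position_clique[OF i'(1)] i' kK by simp
qed

lemma position_greater_clique_occurrence:
  assumes iL: "i < L" and kK: "k \<in> K" and c: "t < prefix_count w k i"
  shows "real n * real t + real (clique_rank k) < position i"
proof -
  have tm: "t < m" using c prefix_count_le_count_list[of w k i] unif kK KI by fastforce
  obtain i' where i': "i' < L" "w ! i' = k" "prefix_count w k i' = t"
    using occurrence_with_index[of k t] kK KI tm by auto
  have "i' < i" using less_if_prefix_count_less[of w k i' i] i'(3) c by simp
  then have "position i' < position i" using position_strict_mono iL by blast
  then show ?thesis using position_clique[OF i'(1)] i' kK by simp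
qed

lemma phase_below_clique_rank:
  assumes kK: "k \<in> K" and vk: "v \<noteq> k" and r: "alternates_from w v k"
    and iL: "i < L" and wi: "w ! i = v"
  shows "phase i < real (clique_rank k) \<and> real (clique_rank k) < phase i + real n"
proof -
  define t where "t = prefix_count w v i"
  have ck: "prefix_count w k i = t" using r iL wi unfolding alternates_from_def t_def by auto
  have ph: "position i = phase i + real n * real t" using position_eq_phase[of i] wi t_def by simp
  have "phase i < real (clique_rank k)"
    using position_less_clique_occurrence[OF iL kK _ ck] prefix_count_less_m[OF iL] wi vk ph t_def
    by simp
  moreover have "real (clique_rank k) < phase i + real n"
  proof (cases t)
    case 0
    have "real (clique_rank k) + 1 \<le> real n" using clique_rank_less[OF kK] by linarith
    then show ?thesis using 0 ph position_bounds[OF iL] by simp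
  next
    case (Suc t')
    have "real n * real t' + real (clique_rank k) < position i"
      using position_greater_clique_occurrence[OF iL kK] ck Suc by simp
    then show ?thesis using ph Suc by (simp add: algebra_simps)
  qed
  ultimately show ?thesis by simp
qed

lemma phase_above_clique_rank:
  assumes kK: "k \<in> K" and vk: "v \<noteq> k" and r: "alternates_from w k v"
    and iL: "i < L" and wi: "w ! i = v"
  shows "phase i < real (clique_rank k) + real n \<and> real (clique_rank k) < phase i"
proof -
  define t where "t = prefix_count w v i"
  have ck: "prefix_count w k i = Suc t" using r iL wi unfolding alternates_from_def t_def by auto
  have ph: "position i = phase i + real n * real t" using position_eq_phase[of i] wi t_def by simp
  have "real (clique_rank k) < phase i"
    using position_greater_clique_occurrence[OF iL kK, of t] ck ph by simp
  moreover have "phase i < real (clique_rank k) + real n"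
  proof (cases "Suc t < m")
    case True
    then show ?thesis using position_less_clique_occurrence[OF iL kK _ ck True] wi vk ph
      by (simp add: algebra_simps)
  next
    case False
    have "Suc t \<le> m" using ck prefix_count_le_count_list[of w k i] unif kK KI by fastforce
    then have "m = Suc t" using False by simp
    then have "position i < real n * real t + real n - 1/2" using position_bounds[OF iL]
      by (simp add: algebra_simps)
    then show ?thesis using ph by simp
  qed
  ultimately show ?thesis by simp
qed

lemma alternate_clique_phase_separated:
  assumes kK: "k \<in> K" and vk: "v \<noteq> k" and alt: "alternate w v k"
  shows "\<exists>c\<le>1. \<forall>i<L. w ! i = v \<longrightarrow> phase i < real (clique_rank k) + real c * real n \<and>
    real (clique_rank k) + real c * real n < phase i + real n"
proof (cases "alternates_from w v k")
  case True
  then show ?thesis using phase_below_clique_rank[OF kK vk] by (intro exI[of _ 0]) auto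
next
  case False
  then have "alternates_from w k v" using alternate_iff_alternates_from[OF vk] alt by simp
  then show ?thesis using phase_above_clique_rank[OF kK vk] by (intro exI[of _ 1]) auto
qed

definition occurrences :: "'a \<Rightarrow> nat set" where "occurrences x = {i. i < L \<and> w ! i = x}"
definition phases :: "'a \<Rightarrow> real set" where "phases x = phase ` occurrences x"
definition min_phase :: "'a \<Rightarrow> real" where "min_phase x = Min (phases x)"
definition max_phase :: "'a \<Rightarrow> real" where "max_phase x = Max (phases x)"

lemma finite_phases: "finite (phases x)" unfolding phases_def occurrences_def by simp

lemma phases_nonempty: "x \<in> V \<Longrightarrow> phases x \<noteq> {}"
  using occurrence_with_index[of x 0] m_pos unfolding phases_def occurrences_def by fastforce

lemma min_phase_le: "i < L \<Longrightarrow> w ! i = x \<Longrightarrow> min_phase x \<le> phase i"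
  unfolding min_phase_def phases_def occurrences_def by (rule Min_le) auto

lemma max_phase_ge: "i < L \<Longrightarrow> w ! i = x \<Longrightarrow> phase i \<le> max_phase x"
  unfolding max_phase_def phases_def occurrences_def by (rule Max_ge) auto

lemma min_phase_attained:
  "x \<in> V \<Longrightarrow> \<exists>i<L. w ! i = x \<and> min_phase x = phase i"
proof -
  assume "x \<in> V"
  then have "min_phase x \<in> phases x" unfolding min_phase_def using finite_phases phases_nonempty
    by (rule_tac Min_in) auto
  then show ?thesis unfolding phases_def occurrences_def by auto
qed

lemma max_phase_attained:
  "x \<in> V \<Longrightarrow> \<exists>i<L. w ! i = x \<and> max_phase x = phase i"
proof -
  assume "x \<in> V"
  then have "max_phase x \<in> phases x" unfolding max_phase_def using finite_phases phases_nonempty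
    by (rule_tac Max_in) auto
  then show ?thesis unfolding phases_def occurrences_def by auto
qed

lemma I_subset_V: "v \<in> I \<Longrightarrow> v \<in> V" using KI by auto
lemma I_not_K: "v \<in> I \<Longrightarrow> v \<notin> K" using KI by auto

lemma edge_iff_clique_in_arc_nat:
  assumes vI: "v \<in> I" and kK: "k \<in> K"
  shows "E v k \<longleftrightarrow> (\<exists>c\<le>(1::nat). max_phase v < real (clique_rank k) + real c * real n \<and>
    real (clique_rank k) + real c * real n < min_phase v + real n)"
proof -
  have vV: "v \<in> V" using I_subset_V[OF vI] .
  have kV: "k \<in> V" using kK KI by auto
  have vk: "v \<noteq> k" using I_not_K[OF vI] kK by auto
  show ?thesis
  proof
    assume "E v k"
    then have "alternate w v k" using edge_iff_alternate[OF vV kV vk] by simp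
    then obtain c where c: "c \<le> 1"
      and H: "\<forall>i<L. w ! i = v \<longrightarrow> phase i < real (clique_rank k) + real c * real n \<and>
        real (clique_rank k) + real c * real n < phase i + real n"
      using alternate_clique_phase_separated[OF kK vk] by blast
    obtain i1 where i1: "i1 < L" "w ! i1 = v" "max_phase v = phase i1"
      using max_phase_attained[OF vV] by blast
    obtain i2 where i2: "i2 < L" "w ! i2 = v" "min_phase v = phase i2"
      using min_phase_attained[OF vV] by blast
    show "\<exists>c\<le>(1::nat). max_phase v < real (clique_rank k) + real c * real n \<and>
        real (clique_rank k) + real c * real n < min_phase v + real n"
      using c H i1 i2 by (intro exI[of _ c]) auto
  next
    assume "\<exists>c\<le>(1::nat). max_phase v < real (clique_rank k) + real c * real n \<and>
        real (clique_rank k) + real c * real n < min_phase v + real n"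
    then obtain c where c: "c \<le> 1" "max_phase v < real (clique_rank k) + real c * real n"
      "real (clique_rank k) + real c * real n < min_phase v + real n"
      by blast
    have "phase_separated v k c" unfolding phase_separated_def
    proof (intro allI impI)
      fix i i' assume a: "i < L" "i' < L" "w ! i = v" "w ! i' = k"
      have "phase i' = real (clique_rank k)" using phase_clique[OF a(2)] a(4) kK by simp
      then show "phase i < phase i' + real c * real n \<and>
          phase i' + real c * real n < phase i + real n"
        using c max_phase_ge[OF a(1,3)] min_phase_le[OF a(1,3)] by simp
    qed
    then have "alternate w v k" by (rule alternate_if_phases_separated[OF vk vV kV c(1)])
    then show "E v k" using edge_iff_alternate[OF vV kV vk] by simp
  qed
qed

lemma max_phase_gt: "x \<in> V \<Longrightarrow> -1/2 < max_phase x"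
proof -
  assume xV: "x \<in> V"
  obtain i where i: "i < L" "w ! i = x" "prefix_count w x i = 0"
    using occurrence_with_index[OF xV] m_pos by auto
  have "phase i = position i" unfolding phase_def using i by simp
  then show ?thesis using position_bounds[OF i(1)] max_phase_ge[OF i(1,2)] by simp
qed

lemma min_phase_less: "x \<in> V \<Longrightarrow> min_phase x < real n - 1/2"
proof -
  assume xV: "x \<in> V"
  obtain m' where m': "m = Suc m'" using m_pos by (cases m) auto
  then have "m' < m" by simp
  then obtain i where i: "i < L" "w ! i = x" "prefix_count w x i = m'"
    using occurrence_with_index[OF xV] by blast
  have "real (n * m) = real n * real m' + real n" using m' by (simp add: algebra_simps)
  moreover have "phase i = position i - real n * real m'" unfolding phase_def using i by simp
  ultimately show ?thesis using position_bounds[OF i(1)] min_phase_le[OF i(1,2)] by simp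
qed

lemma independent_arcs_not_interleaved:
  assumes uI: "u \<in> I" and vI: "v \<in> I" and uv: "u \<noteq> v"
  shows "\<not> (max_phase u < min_phase v + of_int c * real n \<and>
    max_phase v + of_int c * real n < min_phase u + real n)"
proof
  assume a: "max_phase u < min_phase v + of_int c * real n \<and>
    max_phase v + of_int c * real n < min_phase u + real n"
  have uV: "u \<in> V" and vV: "v \<in> V" using uI vI KI by auto
  consider "c \<le> -1" | "c \<ge> 2" | "0 \<le> c" "c \<le> 1" by linarith
  then show False
  proof cases
    case 1
    then have "of_int c * real n \<le> -1 * real n" by (intro mult_right_mono) auto
    then show False using a max_phase_gt[OF uV] min_phase_less[OF vV] by simp
  next
    case 2
    then have "2 * real n \<le> of_int c * real n" by (intro mult_right_mono) auto
    then show False using a max_phase_gt[OF vV] min_phase_less[OF uV] by simp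
  next
    case 3
    have sep: "phase_separated u v (nat c)" unfolding phase_separated_def
    proof (intro allI impI)
      fix i i' assume b: "i < L" "i' < L" "w ! i = u" "w ! i' = v"
      show "phase i < phase i' + real (nat c) * real n \<and>
          phase i' + real (nat c) * real n < phase i + real n"
        using a 3 max_phase_ge[OF b(1,3)] min_phase_le[OF b(1,3)] max_phase_ge[OF b(2,4)]
          min_phase_le[OF b(2,4)] by simp
    qed
    have "alternate w u v" using alternate_if_phases_separated[OF uv uV vV _ sep] 3 by simp
    then show False using edge_iff_alternate[OF uV vV uv] ind uI vI unfolding is_independent_def
      by blast
  qed
qed

lemma phase_minus_jitter_Ints: "w ! i \<notin> K \<Longrightarrow> phase i - jitter i \<in> \<int>"
  unfolding phase_def position_def by simp

lemma phase_not_Ints: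
  assumes iL: "i < L" and nK: "w ! i \<notin> K"
  shows "phase i \<notin> \<int>"
proof
  assume "phase i \<in> \<int>"
  then have "phase i - (phase i - jitter i) \<in> \<int>" using phase_minus_jitter_Ints[OF nK]
    by (rule Ints_diff)
  then have "jitter i \<in> \<int>" by simp
  moreover have "\<bar>jitter i\<bar> < 1" using jitter_bounds[OF iL] by simp
  ultimately have "jitter i = 0" by (rule Ints_nonzero_abs_less1)
  then show False using jitter_bounds[OF iL] by simp
qed

lemma phase_diff_not_Ints:
  assumes iL: "i < L" and i'L: "i' < L" and nK: "w ! i \<notin> K" and nK': "w ! i' \<notin> K"
    and ne: "i \<noteq> i'"
  shows "phase i - phase i' \<notin> \<int>"
proof
  assume "phase i - phase i' \<in> \<int>"
  moreover have "(phase i - jitter i) - (phase i' - jitter i') \<in> \<int>"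
    by (intro Ints_diff phase_minus_jitter_Ints nK nK')
  ultimately have "(phase i - phase i') - ((phase i - jitter i) - (phase i' - jitter i')) \<in> \<int>"
    by (rule Ints_diff)
  then have "jitter i - jitter i' \<in> \<int>" by (simp add: algebra_simps)
  moreover have "\<bar>jitter i - jitter i'\<bar> < 1"
    using jitter_bounds[OF iL] jitter_bounds[OF i'L] by auto
  ultimately have "jitter i - jitter i' = 0" by (rule Ints_nonzero_abs_less1)
  then show False using jitter_inj[OF iL i'L] ne by simp
qed

lemma extreme_phase_diff_not_Ints:
  assumes uI: "u \<in> I" and vI: "v \<in> I" and uv: "u \<noteq> v"
    and a: "a = min_phase u \<or> a = max_phase u" and b: "b = min_phase v \<or> b = max_phase v"
  shows "(a - b) \<notin> \<int>"
proof -
  have uV: "u \<in> V" and vV: "v \<in> V" using uI vI KI by auto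
  obtain i where i: "i < L" "w ! i = u" "a = phase i"
    using a min_phase_attained[OF uV] max_phase_attained[OF uV] by metis
  obtain i' where i': "i' < L" "w ! i' = v" "b = phase i'"
    using b min_phase_attained[OF vV] max_phase_attained[OF vV] by metis
  have "i \<noteq> i'" using i i' uv by auto
  then show ?thesis using phase_diff_not_Ints[OF i(1) i'(1)] i i' I_not_K uI vI by simp
qed

lemma extreme_phase_not_Ints:
  assumes uI: "u \<in> I" and a: "a = min_phase u \<or> a = max_phase u"
  shows "a \<notin> \<int>"
proof -
  have uV: "u \<in> V" using uI KI by auto
  obtain i where i: "i < L" "w ! i = u" "a = phase i"
    using a min_phase_attained[OF uV] max_phase_attained[OF uV] by metis
  then show ?thesis using phase_not_Ints[OF i(1)] I_not_K uI by simp
qed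

lemma edge_iff_clique_on_arc:
  assumes vI: "v \<in> I" and kK: "k \<in> K"
  shows "E v k \<longleftrightarrow> on_arc (max_phase v) (min_phase v + real n) (real (clique_rank k))"
proof
  assume "E v k"
  then obtain c :: nat where "c \<le> 1" "max_phase v < real (clique_rank k) + real c * real n"
    "real (clique_rank k) + real c * real n < min_phase v + real n"
    using edge_iff_clique_in_arc_nat[OF vI kK] by blast
  then show "on_arc (max_phase v) (min_phase v + real n) (real (clique_rank k))"
    by (intro exI[of _ "int c"]) simp
next
  assume "on_arc (max_phase v) (min_phase v + real n) (real (clique_rank k))"
  then obtain c :: int where c: "max_phase v < real (clique_rank k) + of_int c * real n"
    "real (clique_rank k) + of_int c * real n < min_phase v + real n"
    by blast
  have vV: "v \<in> V" using vI KI by auto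
  have jn: "real (clique_rank k) + 1 \<le> real n" using clique_rank_less[OF kK] by linarith
  consider "c \<le> -1" | "c = 0" | "c = 1" | "c \<ge> 2" by linarith
  then show "E v k"
  proof cases
    case 1
    then have "of_int c * real n \<le> -1 * real n" by (intro mult_right_mono) auto
    then show ?thesis using c max_phase_gt[OF vV] jn by simp
  next
    case 4
    then have "2 * real n \<le> of_int c * real n" by (intro mult_right_mono) auto
    then show ?thesis using c min_phase_less[OF vV] by simp
  qed (use c edge_iff_clique_in_arc_nat[OF vI kK] in \<open>force+\<close>)
qed

section \<open>Sorting keys for a 3-uniform representation\<close>

definition attached :: "'a set" where "attached = {v\<in>I. \<exists>k\<in>K. E v k}"

lemma attached_in_I: "v \<in> attached \<Longrightarrow> v \<in> I" unfolding attached_def by auto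

lemma min_phase_le_max_phase: "v \<in> V \<Longrightarrow> min_phase v \<le> max_phase v"
  unfolding min_phase_def max_phase_def using finite_phases phases_nonempty
  by (meson Max_ge Min_in order_trans Min_le Max_in)

lemma arc_width: "v \<in> attached \<Longrightarrow> max_phase v - min_phase v < real n"
proof -
  assume "v \<in> attached"
  then obtain k where vI: "v \<in> I" and kK: "k \<in> K" and "E v k" unfolding attached_def
    by auto
  then obtain c :: int where "max_phase v < real (clique_rank k) + of_int c * real n"
    "real (clique_rank k) + of_int c * real n < min_phase v + real n"
    using edge_iff_clique_on_arc[OF vI kK] by blast
  then show ?thesis by linarith
qed

definition wraps :: "'a \<Rightarrow> bool" where
  "wraps v \<longleftrightarrow> (\<exists>d::int. min_phase v + of_int d * real n < 0 \<and> 0 < max_phase v + of_int d * real n)"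

text \<open>Shifting by \<open>shift v\<close> periods moves the arc of phases of \<open>v\<close> across \<open>0\<close> if possible, and
  otherwise puts its lower end into \<open>(0, n)\<close>.\<close>
definition shift :: "'a \<Rightarrow> int" where
  "shift v = (if wraps v
     then (SOME d::int. min_phase v + of_int d * real n < 0 \<and> 0 < max_phase v + of_int d * real n)
     else - \<lfloor>min_phase v / real n\<rfloor>)"

definition lo :: "'a \<Rightarrow> real" where "lo v = min_phase v + of_int (shift v) * real n"
definition hi :: "'a \<Rightarrow> real" where "hi v = max_phase v + of_int (shift v) * real n"

lemma hi_minus_lo: "hi v - lo v = max_phase v - min_phase v" unfolding hi_def lo_def by simp

lemma lo_hi_not_Ints: "v \<in> I \<Longrightarrow> lo v \<notin> \<int> \<and> hi v \<notin> \<int>"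
  unfolding lo_def hi_def using extreme_phase_not_Ints by (auto intro: not_Ints_add_Ints)

lemma wraps_lo_hi:
  assumes vN: "v \<in> attached" and t: "wraps v"
  shows "lo v < 0 \<and> 0 < hi v \<and> - real n < lo v \<and> hi v < real n"
proof -
  have "min_phase v + of_int (shift v) * real n < 0 \<and>
      0 < max_phase v + of_int (shift v) * real n"
    unfolding shift_def using t someI_ex[OF t[unfolded wraps_def]] by simp
  then have "lo v < 0" "0 < hi v" unfolding lo_def hi_def by auto
  moreover have "hi v - lo v < real n" using arc_width[OF vN] hi_minus_lo by simp
  ultimately show ?thesis by linarith
qed

lemma not_wraps_lo_hi:
  assumes vN: "v \<in> attached" and t: "\<not> wraps v"
  shows "0 < lo v \<and> lo v \<le> hi v \<and> hi v < real n"
proof -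
  have vI: "v \<in> I" using attached_in_I[OF vN] .
  have vV: "v \<in> V" using vI KI by auto
  define q where "q = min_phase v / real n"
  have N: "real n > 0" by (rule card_K_real_pos)
  have muq: "min_phase v = q * real n" unfolding q_def using N by simp
  have d: "shift v = - \<lfloor>q\<rfloor>" unfolding shift_def q_def using t by simp
  have mpq: "lo v = (q - of_int \<lfloor>q\<rfloor>) * real n" unfolding lo_def d muq
    by (simp add: algebra_simps)
  have f1: "of_int \<lfloor>q\<rfloor> \<le> q" "q < of_int \<lfloor>q\<rfloor> + 1" by linarith+
  have mp0: "0 \<le> lo v" using mpq f1 N by simp
  have "q - of_int \<lfloor>q\<rfloor> < 1" using f1 by linarith
  then have mpn: "lo v < real n" using mpq N
    by (simp add: mult_strict_right_mono[of _ 1, simplified])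
  have "lo v \<noteq> 0" using lo_hi_not_Ints[OF vI] by force
  then have p: "0 < lo v" using mp0 by simp
  have le: "lo v \<le> hi v" using min_phase_le_max_phase[OF vV] unfolding lo_def hi_def by simp
  have "hi v < real n"
  proof (rule ccontr)
    assume "\<not> hi v < real n"
    moreover have "hi v \<noteq> real n" using lo_hi_not_Ints[OF vI] by force
    ultimately have gt: "hi v > real n" by simp
    have "min_phase v + of_int (shift v - 1) * real n < 0 \<and>
        0 < max_phase v + of_int (shift v - 1) * real n"
      using gt mpn unfolding lo_def hi_def by (simp add: algebra_simps)
    then have "wraps v" unfolding wraps_def by blast
    then show False using t by simp
  qed
  then show ?thesis using p le by simp
qed

lemma on_arc_shift:
  "on_arc (a + of_int d * real n) (b + of_int d * real n) r \<longleftrightarrow> on_arc a b r"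
proof
  assume "on_arc (a + of_int d * real n) (b + of_int d * real n) r"
  then obtain c :: int where "a + of_int d * real n < r + of_int c * real n"
    "r + of_int c * real n < b + of_int d * real n" by blast
  then show "on_arc a b r" by (intro exI[of _ "c - d"]) (simp add: algebra_simps)
next
  assume "on_arc a b r"
  then obtain c :: int where "a < r + of_int c * real n" "r + of_int c * real n < b" by blast
  then show "on_arc (a + of_int d * real n) (b + of_int d * real n) r"
    by (intro exI[of _ "c + d"]) (simp add: algebra_simps)
qed

lemma edge_iff_clique_on_shifted_arc:
  assumes vI: "v \<in> I" and kK: "k \<in> K"
  shows "E v k \<longleftrightarrow> on_arc (hi v) (lo v + real n) (real (clique_rank k))"
proof -
  have "lo v + real n = (min_phase v + real n) + of_int (shift v) * real n"
    unfolding lo_def by simp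
  then show ?thesis
    using edge_iff_clique_on_arc[OF vI kK] on_arc_shift[of "max_phase v" "shift v"] unfolding hi_def
    by presburger
qed

lemma wraps_edge_iff:
  assumes vN: "v \<in> attached" and t: "wraps v" and kK: "k \<in> K"
  shows "E v k \<longleftrightarrow> hi v < real (clique_rank k) \<and>
      real (clique_rank k) < lo v + real n"
proof -
  have nA: "lo v < 0 \<and> 0 < hi v \<and> - real n < lo v \<and> hi v < real n"
    using wraps_lo_hi[OF vN t] .
  have jn: "real (clique_rank k) + 1 \<le> real n" using clique_rank_less[OF kK] by linarith
  show ?thesis
  proof
    assume "E v k"
    then obtain c :: int where c: "hi v < real (clique_rank k) + of_int c * real n"
      "real (clique_rank k) + of_int c * real n < lo v + real n"
      using edge_iff_clique_on_shifted_arc[OF attached_in_I[OF vN] kK] by blast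
    consider "c \<le> -1" | "c = 0" | "c \<ge> 1" by linarith
    then show "hi v < real (clique_rank k) \<and> real (clique_rank k) < lo v + real n"
    proof cases
      case 1
      then have "of_int c * real n \<le> -1 * real n" by (intro mult_right_mono) auto
      then show ?thesis using c nA jn by linarith
    next
      case 2 then show ?thesis using c by simp
    next
      case 3
      then have "1 * real n \<le> of_int c * real n" by (intro mult_right_mono) auto
      then show ?thesis using c nA jn by linarith
    qed
  next
    assume "hi v < real (clique_rank k) \<and> real (clique_rank k) < lo v + real n"
    then show "E v k" using edge_iff_clique_on_shifted_arc[OF attached_in_I[OF vN] kK]
      by (intro iffD2[OF edge_iff_clique_on_shifted_arc[OF attached_in_I[OF vN] kK]] exI[of _ 0])
        simp
  qed
qed

lemma not_wraps_edge_iff: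
  assumes vN: "v \<in> attached" and t: "\<not> wraps v" and kK: "k \<in> K"
  shows "E v k \<longleftrightarrow> real (clique_rank k) < lo v \<or> hi v < real (clique_rank k)"
proof -
  have nB: "0 < lo v \<and> lo v \<le> hi v \<and> hi v < real n" using not_wraps_lo_hi[OF vN t] .
  have jn: "real (clique_rank k) + 1 \<le> real n" using clique_rank_less[OF kK] by linarith
  show ?thesis
  proof
    assume "E v k"
    then obtain c :: int where c: "hi v < real (clique_rank k) + of_int c * real n"
      "real (clique_rank k) + of_int c * real n < lo v + real n"
      using edge_iff_clique_on_shifted_arc[OF attached_in_I[OF vN] kK] by blast
    consider "c \<le> -1" | "c = 0" | "c = 1" | "c \<ge> 2" by linarith
    then show "real (clique_rank k) < lo v \<or> hi v < real (clique_rank k)"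
    proof cases
      case 1
      then have "of_int c * real n \<le> -1 * real n" by (intro mult_right_mono) auto
      then show ?thesis using c nB jn by linarith
    next
      case 2 then show ?thesis using c by simp
    next
      case 3 then show ?thesis using c by simp
    next
      case 4
      then have "2 * real n \<le> of_int c * real n" by (intro mult_right_mono) auto
      then show ?thesis using c nB jn by linarith
    qed
  next
    assume h: "real (clique_rank k) < lo v \<or> hi v < real (clique_rank k)"
    show "E v k"
    proof (cases "real (clique_rank k) < lo v")
      case True
      then show ?thesis using nB jn
        by (intro iffD2[OF edge_iff_clique_on_shifted_arc[OF attached_in_I[OF vN] kK]] exI[of _ 1])
          simp
    next
      case False
      then have "hi v < real (clique_rank k)" using h by simp
      then show ?thesis using nB jn
        by (intro iffD2[OF edge_iff_clique_on_shifted_arc[OF attached_in_I[OF vN] kK]] exI[of _ 0])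
        simp
    qed
  qed
qed

lemma attached_arcs_not_interleaved:
  assumes uN: "u \<in> attached" and vN: "v \<in> attached" and uv: "u \<noteq> v"
  shows "\<not> (hi u < lo v + of_int c * real n \<and> hi v + of_int c * real n < lo u + real n)"
  using independent_arcs_not_interleaved[OF attached_in_I[OF uN] attached_in_I[OF vN] uv,
      of "c + shift v - shift u"]
  unfolding hi_def lo_def
  by (simp add: algebra_simps)

lemma lo_hi_diff_not_Ints:
  assumes uI: "u \<in> I" and vI: "v \<in> I" and uv: "u \<noteq> v"
    and a: "a = lo u \<or> a = hi u" and b: "b = lo v \<or> b = hi v"
  shows "(a - b) \<notin> \<int>"
proof -
  obtain a0 where a0: "a0 = min_phase u \<or> a0 = max_phase u" "a = a0 + of_int (shift u) * real n"
    using a unfolding lo_def hi_def by blast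
  obtain b0 where b0: "b0 = min_phase v \<or> b0 = max_phase v" "b = b0 + of_int (shift v) * real n"
    using b unfolding lo_def hi_def by blast
  have "a - b = (a0 - b0) + of_int (shift u - shift v) * real n" using a0 b0
    by (simp add: algebra_simps)
  moreover have "(a0 - b0) + of_int (shift u - shift v) * real n \<notin> \<int>"
    by (intro not_Ints_add_Ints extreme_phase_diff_not_Ints[OF uI vI uv a0(1) b0(1)]) simp
  ultimately show ?thesis by simp
qed

definition wrapping :: "'a set" where "wrapping = {v\<in>attached. wraps v}"
definition nonwrapping :: "'a set" where "nonwrapping = {v\<in>attached. \<not> wraps v}"

lemma finite_attached: "finite attached"
  using finite_V KI unfolding attached_def by (auto intro: finite_subset)

lemma finite_wrapping: "finite wrapping"
  unfolding wrapping_def using finite_attached by simp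

lemma finite_nonwrapping: "finite nonwrapping"
  unfolding nonwrapping_def using finite_attached by simp

text \<open>Non-wrapping arcs are pairwise not interleaved, hence pairwise intersecting, so the largest
  lower end lies in all of them.\<close>
definition pivot :: real where "pivot = Max (lo ` nonwrapping)"

lemma pivot_bounds:
  assumes vB: "v \<in> nonwrapping"
  shows "lo v \<le> pivot \<and> pivot \<le> hi v \<and> pivot \<notin> \<int> \<and> 0 < pivot \<and> pivot < real n"
proof -
  have ne: "lo ` nonwrapping \<noteq> {}" using vB by auto
  obtain u where u: "u \<in> nonwrapping" "pivot = lo u" unfolding pivot_def
    using Max_in[OF _ ne] finite_nonwrapping by auto
  have uN: "u \<in> attached" "\<not> wraps u" and vN: "v \<in> attached" "\<not> wraps v"
    using u vB unfolding nonwrapping_def by auto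
  have le: "lo v \<le> pivot" unfolding pivot_def using vB finite_nonwrapping by simp
  have "pivot \<le> hi v"
  proof (cases "u = v")
    case True
    then show ?thesis using u not_wraps_lo_hi[OF vN] by simp
  next
    case False
    have "\<not> (hi v < lo u + of_int 0 * real n \<and> hi u + of_int 0 * real n < lo v + real n)"
      using attached_arcs_not_interleaved[OF vN(1) uN(1)] False by blast
    moreover have "hi u < lo v + real n" using not_wraps_lo_hi[OF uN] not_wraps_lo_hi[OF vN] by simp
    ultimately show ?thesis using u by simp
  qed
  moreover have "pivot \<notin> \<int>" using u lo_hi_not_Ints attached_in_I uN by simp
  moreover have "0 < pivot \<and> pivot < real n" using u not_wraps_lo_hi[OF uN] by simp
  ultimately show ?thesis using le by simp
qed

definition wrap_rank :: "'a \<Rightarrow> nat" where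
  "wrap_rank v = Suc (card {u\<in>wrapping. hi u > hi v})"

definition nowrap_rank :: "'a \<Rightarrow> nat" where
  "nowrap_rank v = card {u\<in>nonwrapping. lo u > lo v}"

lemma wrap_rank_antimono:
  "u \<in> wrapping \<Longrightarrow> v \<in> wrapping \<Longrightarrow> hi u < hi v \<Longrightarrow> wrap_rank v < wrap_rank u"
proof -
  assume u: "u \<in> wrapping" and v: "v \<in> wrapping" and lt: "hi u < hi v"
  have "{x\<in>wrapping. hi x > hi v} < {x\<in>wrapping. hi x > hi u}" using u v lt by auto
  then have "card {x\<in>wrapping. hi x > hi v} < card {x\<in>wrapping. hi x > hi u}"
    by (rule psubset_card_mono[rotated]) (simp add: finite_wrapping)
  then show ?thesis unfolding wrap_rank_def by simp
qed

lemma nowrap_rank_antimono: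
  "u \<in> nonwrapping \<Longrightarrow> v \<in> nonwrapping \<Longrightarrow> lo u < lo v \<Longrightarrow> nowrap_rank v < nowrap_rank u"
proof -
  assume u: "u \<in> nonwrapping" and v: "v \<in> nonwrapping" and lt: "lo u < lo v"
  have "{x\<in>nonwrapping. lo x > lo v} < {x\<in>nonwrapping. lo x > lo u}" using u v lt by auto
  then have "card {x\<in>nonwrapping. lo x > lo v} < card {x\<in>nonwrapping. lo x > lo u}"
    by (rule psubset_card_mono[rotated]) (simp add: finite_nonwrapping)
  then show ?thesis unfolding nowrap_rank_def by simp
qed

definition isolated_index :: "'a \<Rightarrow> nat" where "isolated_index = (SOME f. inj_on f V)"

lemma inj_on_isolated_index: "inj_on isolated_index V"
proof -
  obtain f :: "'a \<Rightarrow> nat" and N where "inj_on f V"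
    using finite_imp_inj_to_nat_seg[OF finite_V] by blast
  then show ?thesis unfolding isolated_index_def by (rule someI[where P = "\<lambda>f. inj_on f V"])
qed

text \<open>The sort key of the \<open>t\<close>-th occurrence of \<open>v\<close> in the 3-uniform word; the second component
  breaks ties.\<close>
definition key :: "'a \<Rightarrow> nat \<Rightarrow> real \<times> nat" where
  "key v t = (if v \<in> K then (real (clique_rank v) + real t * real n, 0)
    else if v \<in> attached then
      (if wraps v
       then (if t = 0 then (hi v, 0) else if t = 1 then (real n, wrap_rank v)
         else (2 * real n + lo v, 0))
       else (if t = 0 then (lo v, 0) else if t = 1 then (real n + hi v, 0)
         else (2 * real n + pivot, nowrap_rank v)))
    else (3 * real n + real (isolated_index v), t))"

lemma V_cases: "v \<in> V \<Longrightarrow> v \<in> K \<or> v \<in> wrapping \<or> v \<in> nonwrapping \<or> (v \<in> I \<and> v \<notin> attached)"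
  using KI unfolding wrapping_def nonwrapping_def by auto

lemma wrapping_D: "v \<in> wrapping \<Longrightarrow> v \<in> attached \<and> wraps v \<and> v \<in> I \<and> v \<notin> K"
  unfolding wrapping_def using attached_in_I I_not_K by auto

lemma nonwrapping_D: "v \<in> nonwrapping \<Longrightarrow> v \<in> attached \<and> \<not> wraps v \<and> v \<in> I \<and> v \<notin> K"
  unfolding nonwrapping_def using attached_in_I I_not_K by auto

lemma key_clique: "v \<in> K \<Longrightarrow> key v t = (real (clique_rank v) + real t * real n, 0)"
  unfolding key_def by simp

lemma key_wrapping:
  "v \<in> wrapping \<Longrightarrow>
    key v 0 = (hi v, 0) \<and> key v 1 = (real n, wrap_rank v) \<and> key v 2 = (2 * real n + lo v, 0)"
  using wrapping_D[of v] unfolding key_def by simp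

lemma key_nonwrapping:
  "v \<in> nonwrapping \<Longrightarrow>
    key v 0 = (lo v, 0) \<and> key v 1 = (real n + hi v, 0) \<and>
    key v 2 = (2 * real n + pivot, nowrap_rank v)"
  using nonwrapping_D[of v] unfolding key_def by simp

lemma key_isolated:
  "v \<in> I \<Longrightarrow> v \<notin> attached \<Longrightarrow> key v t = (3 * real n + real (isolated_index v), t)"
  using I_not_K[of v] unfolding key_def by simp

lemma wrapping_lo_hi: "v \<in> wrapping \<Longrightarrow> lo v < 0 \<and> 0 < hi v \<and> - real n < lo v \<and> hi v < real n"
  using wraps_lo_hi wrapping_D by blast

lemma nonwrapping_lo_hi: "v \<in> nonwrapping \<Longrightarrow> 0 < lo v \<and> lo v \<le> hi v \<and> hi v < real n"
  using not_wraps_lo_hi nonwrapping_D by blast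

lemma wrap_rank_pos: "wrap_rank v \<ge> 1"
  unfolding wrap_rank_def by simp

lemma key_strict_mono: "v \<in> V \<Longrightarrow> key v 0 < key v 1 \<and> key v 1 < key v 2"
  using V_cases[of v] key_clique[of v] card_K_real_pos key_wrapping[of v] wrapping_lo_hi[of v]
    key_nonwrapping[of v] nonwrapping_lo_hi[of v] pivot_bounds[of v] key_isolated[of v]
  by fastforce

lemma key_clique':
  "v \<in> K \<Longrightarrow> key v t = (real (clique_rank v + t * n), 0)" using key_clique by simp

lemma lo_hi_distinct:
  assumes uI: "u \<in> I" and vI: "v \<in> I" and uv: "u \<noteq> v"
  shows "hi u \<noteq> hi v" "lo u \<noteq> lo v" "hi u \<noteq> lo v" "real n + lo u \<noteq> hi v"
proof -
  have n1: "(hi u - hi v) \<notin> \<int>" by (rule lo_hi_diff_not_Ints[OF uI vI uv]) simp_all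
  have n2: "(lo u - lo v) \<notin> \<int>" by (rule lo_hi_diff_not_Ints[OF uI vI uv]) simp_all
  have n3: "(hi u - lo v) \<notin> \<int>" by (rule lo_hi_diff_not_Ints[OF uI vI uv]) simp_all
  have n4: "(lo u - hi v) \<notin> \<int>" by (rule lo_hi_diff_not_Ints[OF uI vI uv]) simp_all
  show "hi u \<noteq> hi v" using n1 by force
  show "lo u \<noteq> lo v" using n2 by force
  show "hi u \<noteq> lo v" using n3 by force
  show "real n + lo u \<noteq> hi v"
  proof
    assume "real n + lo u = hi v"
    then have "lo u - hi v = - real n" by simp
    then show False using n4 by simp
  qed
qed

lemma key_neq_clique_clique:
  assumes a: "a \<in> K" "b \<in> K" "a \<noteq> b" and t: "t < 3" "t' < 3"
  shows "key a t \<noteq> key b t'"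
proof
  assume e: "key a t = key b t'"
  have "fst (key a t) = fst (key b t')" using e by simp
  then have "real (clique_rank a + t * n) = real (clique_rank b + t' * n)"
    by (simp only: key_clique'[OF a(1)] key_clique'[OF a(2)] fst_conv)
  then have "clique_rank a + t * n = clique_rank b + t' * n" by (simp only: of_nat_eq_iff)
  then have "(clique_rank a + t * n) mod n = (clique_rank b + t' * n) mod n" by simp
  then have "clique_rank a = clique_rank b"
    using clique_rank_less[OF a(1)] clique_rank_less[OF a(2)] by simp
  then show False using clique_rank_inj[OF a(1,2)] a(3) by simp
qed

lemma key_neq_clique_other:
  assumes a: "a \<in> K" "b \<in> V" "b \<notin> K" and t: "t < 3" "t' < 3"
  shows "key a t \<noteq> key b t'"
proof -
  have N: "real n > 0" by (rule card_K_real_pos)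
  have tt: "t' = 0 \<or> t' = 1 \<or> t' = 2" using t by auto
  have "t * n \<le> 2 * n" using t by (intro mult_le_mono1) simp
  then have jl: "clique_rank a + t * n < 3 * n" using clique_rank_less[OF a(1)] by linarith
  consider "b \<in> wrapping" | "b \<in> nonwrapping" | "b \<in> I \<and> b \<notin> attached"
    using V_cases[OF a(2)] a(3) by blast
  then show ?thesis
  proof cases
    case 1
    have bI: "b \<in> I" using wrapping_D[OF 1] by simp
    have "hi b \<notin> \<int>" "2 * real n + lo b \<notin> \<int>"
      using lo_hi_not_Ints[OF bI] by (auto intro: Ints_add_not_Ints)
    then have f: "hi b \<noteq> real (clique_rank a + t * n)"
      "2 * real n + lo b \<noteq> real (clique_rank a + t * n)"
      by (metis Ints_of_nat)+
    show ?thesis using key_clique'[OF a(1)] key_wrapping[OF 1] f wrap_rank_pos[of b] tt by auto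
  next
    case 2
    have bI: "b \<in> I" using nonwrapping_D[OF 2] by simp
    have "lo b \<notin> \<int>" "real n + hi b \<notin> \<int>" "2 * real n + pivot \<notin> \<int>"
      using lo_hi_not_Ints[OF bI] pivot_bounds[OF 2] by (auto intro: Ints_add_not_Ints)
    then have f: "lo b \<noteq> real (clique_rank a + t * n)"
      "real n + hi b \<noteq> real (clique_rank a + t * n)"
      "2 * real n + pivot \<noteq> real (clique_rank a + t * n)"
      by (metis Ints_of_nat)+
    show ?thesis using key_clique'[OF a(1)] key_nonwrapping[OF 2] f tt by auto
  next
    case 3
    have "real (clique_rank a + t * n) < 3 * real n" using jl by linarith
    then show ?thesis using key_clique'[OF a(1)] key_isolated[of b t'] 3 by auto
  qed
qed

lemma key_neq_isolated_other:
  assumes a: "a \<in> I" "a \<notin> attached" "b \<in> V" "b \<notin> K" "a \<noteq> b"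
    and t: "t < 3" "t' < 3"
  shows "key a t \<noteq> key b t'"
proof -
  have N: "real n > 0" by (rule card_K_real_pos)
  have tt: "t' = 0 \<or> t' = 1 \<or> t' = 2" using t by auto
  consider "b \<in> wrapping" | "b \<in> nonwrapping" | "b \<in> I \<and> b \<notin> attached"
    using V_cases[OF a(3)] a(4) by blast
  then show ?thesis
  proof cases
    case 1
    show ?thesis using key_isolated[OF a(1,2)] key_wrapping[OF 1] wrapping_lo_hi[OF 1] N tt by auto
  next
    case 2
    show ?thesis
      using key_isolated[OF a(1,2)] key_nonwrapping[OF 2] nonwrapping_lo_hi[OF 2] pivot_bounds[OF 2] N tt
      by auto
  next
    case 3
    have "isolated_index a \<noteq> isolated_index b" using inj_on_isolated_index a KI 3
      unfolding inj_on_def by auto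
    then show ?thesis using key_isolated[OF a(1,2)] key_isolated[of b] 3 by auto
  qed
qed

lemma key_neq_wrapping_wrapping:
  assumes a: "a \<in> wrapping" "b \<in> wrapping" "a \<noteq> b" and t: "t < 3" "t' < 3"
  shows "key a t \<noteq> key b t'"
proof -
  have tt: "t = 0 \<or> t = 1 \<or> t = 2" "t' = 0 \<or> t' = 1 \<or> t' = 2" using t by auto
  have aI: "a \<in> I" and bI: "b \<in> I" using wrapping_D a by auto
  note pf = lo_hi_distinct[OF aI bI a(3)]
  have "wrap_rank a \<noteq> wrap_rank b"
    using wrap_rank_antimono[OF a(1,2)] wrap_rank_antimono[OF a(2,1)] pf(1) by fastforce
  then show ?thesis
    using key_wrapping[OF a(1)] key_wrapping[OF a(2)] wrapping_lo_hi[OF a(1)] wrapping_lo_hi[OF a(2)] pf tt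
    by auto
qed

lemma key_neq_nonwrapping_nonwrapping:
  assumes a: "a \<in> nonwrapping" "b \<in> nonwrapping" "a \<noteq> b" and t: "t < 3" "t' < 3"
  shows "key a t \<noteq> key b t'"
proof -
  have tt: "t = 0 \<or> t = 1 \<or> t = 2" "t' = 0 \<or> t' = 1 \<or> t' = 2" using t by auto
  have aI: "a \<in> I" and bI: "b \<in> I" using nonwrapping_D a by auto
  note pf = lo_hi_distinct[OF aI bI a(3)]
  have "nowrap_rank a \<noteq> nowrap_rank b"
    using nowrap_rank_antimono[OF a(1,2)] nowrap_rank_antimono[OF a(2,1)] pf(2) by fastforce
  then show ?thesis
    using key_nonwrapping[OF a(1)] key_nonwrapping[OF a(2)] nonwrapping_lo_hi[OF a(1)]
      nonwrapping_lo_hi[OF a(2)] pivot_bounds[OF a(1)] pf tt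
    by auto
qed

lemma key_neq_wrapping_nonwrapping:
  assumes a: "a \<in> wrapping" "b \<in> nonwrapping" and t: "t < 3" "t' < 3"
  shows "key a t \<noteq> key b t'"
proof -
  have tt: "t = 0 \<or> t = 1 \<or> t = 2" "t' = 0 \<or> t' = 1 \<or> t' = 2" using t by auto
  have aI: "a \<in> I" and bI: "b \<in> I" using wrapping_D nonwrapping_D a by auto
  have ab: "a \<noteq> b" using a wrapping_D nonwrapping_D by auto
  note pf = lo_hi_distinct[OF aI bI ab]
  show ?thesis
    using key_wrapping[OF a(1)] key_nonwrapping[OF a(2)] wrapping_lo_hi[OF a(1)]
      nonwrapping_lo_hi[OF a(2)] pivot_bounds[OF a(2)] pf tt
    by auto
qed

lemma key_neq:
  assumes uV: "u \<in> V" and vV: "v \<in> V" and uv: "u \<noteq> v" and t: "t < 3" and t': "t' < 3"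
  shows "key u t \<noteq> key v t'"
  using V_cases[OF uV] V_cases[OF vV] uV vV uv t t' KI
    key_neq_clique_clique[of u v t t']
    key_neq_clique_other[of u v t t'] key_neq_clique_other[of v u t' t]
    key_neq_isolated_other[of u v t t'] key_neq_isolated_other[of v u t' t]
    key_neq_wrapping_wrapping[of u v t t'] key_neq_nonwrapping_nonwrapping[of u v t t']
    key_neq_wrapping_nonwrapping[of u v t t'] key_neq_wrapping_nonwrapping[of v u t' t]
    wrapping_D[of u] wrapping_D[of v] nonwrapping_D[of u] nonwrapping_D[of v]
  by (metis disjoint_iff)

definition vertex_list :: "'a list" where "vertex_list = (SOME xs. set xs = V \<and> distinct xs)"

lemma vertex_list: "set vertex_list = V \<and> distinct vertex_list"
  unfolding vertex_list_def using finite_distinct_list[OF finite_V] by (rule someI_ex)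

definition keyed :: "((real \<times> nat) \<times> 'a) list" where
  "keyed = concat (map (\<lambda>v. [(key v 0, v), (key v 1, v), (key v 2, v)]) vertex_list)"

definition word3 :: "'a list" where "word3 = word_of_keys keyed"

lemma set_keyed: "set keyed = (\<Union>v\<in>V. {(key v 0, v), (key v 1, v), (key v 2, v)})"
  unfolding keyed_def using vertex_list by auto

lemma keys_of_keyed: "v \<in> V \<Longrightarrow> keys_of keyed v = {key v 0, key v 1, key v 2}"
  unfolding keys_of_def set_keyed by auto

lemma distinct_keys: "distinct (map fst keyed)"
proof -
  have "map fst keyed = concat (map (\<lambda>v. [key v 0, key v 1, key v 2]) vertex_list)"
    unfolding keyed_def by (simp add: map_concat comp_def)
  moreover have "distinct (concat (map (\<lambda>v. [key v 0, key v 1, key v 2]) vertex_list))"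
  proof (rule distinct_concat_map)
    show "distinct vertex_list" using vertex_list by simp
  next
    fix v assume "v \<in> set vertex_list"
    then have "v \<in> V" using vertex_list by simp
    then show "distinct [key v 0, key v 1, key v 2]" using key_strict_mono[of v] by auto
  next
    fix v v' assume "v \<in> set vertex_list" "v' \<in> set vertex_list" "v \<noteq> v'"
    then have a: "v \<in> V" "v' \<in> V" "v \<noteq> v'" using vertex_list by auto
    show "set [key v 0, key v 1, key v 2] \<inter> set [key v' 0, key v' 1, key v' 2] = {}"
      using key_neq[OF a, of 0 0] key_neq[OF a, of 0 1] key_neq[OF a, of 0 2]
        key_neq[OF a, of 1 0] key_neq[OF a, of 1 1] key_neq[OF a, of 1 2]
        key_neq[OF a, of 2 0] key_neq[OF a, of 2 1] key_neq[OF a, of 2 2] by auto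
  qed
  ultimately show ?thesis by simp
qed

lemma set_word3: "set word3 = V"
proof
  show "set word3 \<subseteq> V" unfolding word3_def set_word_of_keys set_keyed by auto
  show "V \<subseteq> set word3"
  proof
    fix x assume xV: "x \<in> V"
    have "(key x 0, x) \<in> set keyed" unfolding set_keyed using xV by auto
    then have "x \<in> snd ` set keyed" by (rule image_eqI[rotated]) simp
    then show "x \<in> set word3" unfolding word3_def set_word_of_keys .
  qed
qed

lemma count_list_word3: "v \<in> V \<Longrightarrow> count_list word3 v = 3"
proof -
  assume vV: "v \<in> V"
  have "map snd keyed = concat (map (\<lambda>v. [v, v, v]) vertex_list)"
    unfolding keyed_def by (simp add: map_concat comp_def)
  then have "count_list word3 v = 3 * count_list vertex_list v"
    unfolding word3_def count_list_word_of_keys by (simp add: count_list_concat_triples)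
  also have "count_list vertex_list v = 1"
    using count_list_distinct[of vertex_list v] vertex_list vV by simp
  finally show ?thesis by simp
qed

lemma alternate_word3_iff:
  assumes aV: "a \<in> V" and bV: "b \<in> V" and ab: "a \<noteq> b"
  shows "alternate word3 a b \<longleftrightarrow>
      alternating3 (key a 0) (key a 1) (key a 2) (key b 0) (key b 1) (key b 2)"
proof -
  have "alternate word3 a b \<longleftrightarrow>
      separated_by {key a 0, key a 1, key a 2} {key b 0, key b 1, key b 2} \<and>
      separated_by {key b 0, key b 1, key b 2} {key a 0, key a 1, key a 2}"
    unfolding word3_def
    using alternate_word_of_keys_iff[OF distinct_keys ab] keys_of_keyed[OF aV] keys_of_keyed[OF bV]
    by simp
  also have "\<dots> \<longleftrightarrow> alternating3 (key a 0) (key a 1) (key a 2) (key b 0) (key b 1) (key b 2)"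
    using key_strict_mono[OF aV] key_strict_mono[OF bV] key_neq[OF aV bV ab, of 0 0]
    by (intro separated_by_iff_alternating3) auto
  finally show ?thesis .
qed

lemma edge_sym: "E a b \<longleftrightarrow> E b a"
  using sg unfolding simple_graph_def by blast

lemma not_alternating3_isolated:
  assumes a: "a \<in> I" "a \<notin> attached"
  shows "\<not> alternating3 (key a 0) (key a 1) (key a 2) b1 b2 b3"
proof
  assume h: "alternating3 (key a 0) (key a 1) (key a 2) b1 b2 b3"
  define x where "x = 3 * real n + real (isolated_index a)"
  have k: "key a 0 = (x, 0)" "key a 1 = (x, 1)" using key_isolated[OF a] x_def by auto
  have nb: "\<And>y :: real \<times> nat. \<not> ((x, 0) < y \<and> y < (x, 1))"
  proof
    fix y :: "real \<times> nat" assume "(x, 0) < y \<and> y < (x, 1)"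
    then show False by (cases y) auto
  qed
  from h show False unfolding alternating3_def using nb k by metis
qed

lemma no_edge_isolated:
  "a \<in> I \<Longrightarrow> a \<notin> attached \<Longrightarrow> b \<in> V \<Longrightarrow> \<not> E a b"
proof
  assume a: "a \<in> I" "a \<notin> attached" "b \<in> V" and e: "E a b"
  show False
  proof (cases "b \<in> K")
    case True
    then show False using a e unfolding attached_def by auto
  next
    case False
    then have "b \<in> I" using a KI by auto
    then show False using ind a e unfolding is_independent_def by blast
  qed
qed

lemma alternating3_clique_clique:
  assumes a: "a \<in> K" "b \<in> K" "a \<noteq> b"
  shows "alternating3 (key a 0) (key a 1) (key a 2) (key b 0) (key b 1) (key b 2)"
proof -
  have ne: "clique_rank a \<noteq> clique_rank b" using clique_rank_inj[OF a(1,2)] a(3) by auto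
  have ja: "real (clique_rank a) + 1 \<le> real n" and jb: "real (clique_rank b) + 1 \<le> real n"
    using clique_rank_less[OF a(1)] clique_rank_less[OF a(2)] by linarith+
  show ?thesis
  proof (cases "clique_rank a < clique_rank b")
    case True
    then have "real (clique_rank a) < real (clique_rank b)" by simp
    then show ?thesis unfolding alternating3_def using key_clique[OF a(1)] key_clique[OF a(2)] ja jb
      by auto
  next
    case False
    then have "real (clique_rank b) < real (clique_rank a)" using ne by simp
    then show ?thesis unfolding alternating3_def using key_clique[OF a(1)] key_clique[OF a(2)] ja jb
      by auto
  qed
qed

lemma edge_iff_alternating3_clique_wrapping:
  assumes k: "k \<in> K" and v: "v \<in> wrapping"
  shows "E v k \<longleftrightarrow>
      alternating3 (key v 0) (key v 1) (key v 2) (key k 0) (key k 1) (key k 2)"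
proof -
  have vN: "v \<in> attached" "wraps v" using wrapping_D[OF v] by auto
  have j: "real (clique_rank k) + 1 \<le> real n" using clique_rank_less[OF k] by linarith
  have r: "wrap_rank v \<ge> 1" by (rule wrap_rank_pos)
  show ?thesis unfolding wraps_edge_iff[OF vN k] alternating3_def
    using key_clique[OF k] key_wrapping[OF v] wrapping_lo_hi[OF v] j r by auto
qed

lemma edge_iff_alternating3_clique_nonwrapping:
  assumes k: "k \<in> K" and v: "v \<in> nonwrapping"
  shows "E v k \<longleftrightarrow>
      alternating3 (key v 0) (key v 1) (key v 2) (key k 0) (key k 1) (key k 2)"
proof -
  have vN: "v \<in> attached" "\<not> wraps v" using nonwrapping_D[OF v] by auto
  have j: "real (clique_rank k) + 1 \<le> real n" using clique_rank_less[OF k] by linarith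
  show ?thesis unfolding not_wraps_edge_iff[OF vN k] alternating3_def
    using key_clique[OF k] key_nonwrapping[OF v] nonwrapping_lo_hi[OF v] pivot_bounds[OF v] j
    by auto
qed

lemma not_alternating3_wrapping_wrapping:
  assumes u: "u \<in> wrapping" and v: "v \<in> wrapping"
  shows "\<not> alternating3 (key u 0) (key u 1) (key u 2) (key v 0) (key v 1) (key v 2)"
proof
  assume h: "alternating3 (key u 0) (key u 1) (key u 2) (key v 0) (key v 1) (key v 2)"
  have m1: "hi u < hi v \<Longrightarrow> wrap_rank v < wrap_rank u"
    using wrap_rank_antimono[OF u v] by simp
  have m2: "hi v < hi u \<Longrightarrow> wrap_rank u < wrap_rank v"
    using wrap_rank_antimono[OF v u] by simp
  from h show False unfolding alternating3_def using key_wrapping[OF u] key_wrapping[OF v] m1 m2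
    by auto
qed

lemma not_alternating3_nonwrapping_nonwrapping:
  assumes u: "u \<in> nonwrapping" and v: "v \<in> nonwrapping"
  shows "\<not> alternating3 (key u 0) (key u 1) (key u 2) (key v 0) (key v 1) (key v 2)"
proof
  assume h: "alternating3 (key u 0) (key u 1) (key u 2) (key v 0) (key v 1) (key v 2)"
  have m1: "lo u < lo v \<Longrightarrow> nowrap_rank v < nowrap_rank u"
    using nowrap_rank_antimono[OF u v] by simp
  have m2: "lo v < lo u \<Longrightarrow> nowrap_rank u < nowrap_rank v"
    using nowrap_rank_antimono[OF v u] by simp
  from h show False unfolding alternating3_def
    using key_nonwrapping[OF u] key_nonwrapping[OF v] m1 m2 by auto
qed

lemma not_alternating3_wrapping_nonwrapping:
  assumes u: "u \<in> wrapping" and v: "v \<in> nonwrapping"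
  shows "\<not> alternating3 (key u 0) (key u 1) (key u 2) (key v 0) (key v 1) (key v 2)"
proof
  assume h: "alternating3 (key u 0) (key u 1) (key u 2) (key v 0) (key v 1) (key v 2)"
  have uv: "u \<noteq> v" using u v wrapping_D nonwrapping_D by auto
  have p: "\<not> (hi u < lo v + of_int 0 * real n \<and> hi v + of_int 0 * real n < lo u + real n)"
    using attached_arcs_not_interleaved[OF wrapping_D[OF u, THEN conjunct1]
        nonwrapping_D[OF v, THEN conjunct1] uv]
    by blast
  from h show False unfolding alternating3_def
    using key_wrapping[OF u] key_nonwrapping[OF v] wrapping_lo_hi[OF u] nonwrapping_lo_hi[OF v]
      pivot_bounds[OF v] p
    by auto
qed

lemma edge_iff_alternating3_keys:
  assumes aV: "a \<in> V" and bV: "b \<in> V" and ab: "a \<noteq> b"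
  shows "E a b \<longleftrightarrow>
      alternating3 (key a 0) (key a 1) (key a 2) (key b 0) (key b 1) (key b 2)"
proof -
  let ?A = "\<lambda>a b. alternating3 (key a 0) (key a 1) (key a 2) (key b 0) (key b 1) (key b 2)"
  have sym: "(E a b \<longleftrightarrow> ?A a b) \<longleftrightarrow>
      (E b a \<longleftrightarrow> ?A b a)" for a b
    using edge_sym alternating3_sym by blast
  have isolated: "E a b \<longleftrightarrow>
      ?A a b" if "a \<in> I" "a \<notin> attached" "b \<in> V" for a b
    using that no_edge_isolated not_alternating3_isolated by blast
  have clique: "E a b \<longleftrightarrow> ?A a b" if a: "a \<in> K"
    and b: "b \<in> V" "a \<noteq> b" for a b
  proof -
    consider "b \<in> K" | "b \<in> wrapping" | "b \<in> nonwrapping" | "b \<in> I" "b \<notin> attached"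
      using V_cases[OF b(1)] by blast
    then show ?thesis
    proof cases
      case 1
      then show ?thesis using alternating3_clique_clique[OF a 1 b(2)] cl a b(2)
        unfolding is_clique_def by blast
    next
      case 2
      then show ?thesis using sym edge_iff_alternating3_clique_wrapping[OF a] by blast
    next
      case 3
      then show ?thesis using sym edge_iff_alternating3_clique_nonwrapping[OF a] by blast
    next
      case 4
      then show ?thesis using sym isolated[OF 4] a KI by blast
    qed
  qed
  have attached: "E a b \<longleftrightarrow>
      ?A a b" if "a \<in> attached" "b \<in> attached" "a \<noteq> b" for a b
  proof -
    have "\<not> E a b" using ind that attached_in_I unfolding is_independent_def by blast
    moreover have "\<not> ?A a b"
      using that not_alternating3_wrapping_wrapping not_alternating3_nonwrapping_nonwrapping
        not_alternating3_wrapping_nonwrapping alternating3_sym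
      unfolding wrapping_def nonwrapping_def by blast
    ultimately show ?thesis by blast
  qed
  show ?thesis
    using V_cases[OF aV] V_cases[OF bV] clique[OF _ bV ab] clique[OF _ aV ab[symmetric]]
      isolated[OF _ _ bV] isolated[OF _ _ aV] attached[OF _ _ ab] sym[of a b]
    unfolding wrapping_def nonwrapping_def by blast
qed

lemma represents_word3: "represents word3 V E"
  unfolding represents_def using set_word3 alternate_word3_iff edge_iff_alternating3_keys by blast

lemma uniform_word3: "uniform 3 word3"
  unfolding uniform_def using count_list_word3 set_word3 by simp

end

lemma split_graph_nonempty_clique:
  assumes "split_graph V E" and "V \<noteq> {}"
  obtains K I where "K \<union> I = V" "K \<inter> I =
      {}" "is_clique E K" "is_independent E I" "K \<noteq> {}"
proof -
  obtain K I where KI: "K \<union> I = V" "K \<inter> I = {}" "is_clique E K" "is_independent E I"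
    using assms(1) unfolding split_graph_def by blast
  show ?thesis
  proof (cases "K = {}")
    case True
    obtain v where "v \<in> V" using assms(2) by blast
    moreover have "is_independent E (V - {v})" using KI True unfolding is_independent_def by auto
    ultimately show ?thesis using that[of "{v}" "V - {v}"] by (auto simp: is_clique_def)
  qed (use KI that in blast)
qed

lemma exists_3_uniform_representation:
  assumes "simple_graph V E" and "split_graph V E" and "word_representable V E"
  shows "\<exists>w. uniform 3 w \<and> represents w V E"
proof (cases "V = {}")
  case True
  then show ?thesis by (intro exI[of _ "[]"]) (simp add: uniform_def represents_def)
next
  case False
  obtain w0 where "represents w0 V E" using assms(3) unfolding word_representable_def by blast
  then obtain w where w: "represents w V E" "\<forall>z\<in>V. count_list w z = length w0"
    using exists_uniform_representation by blast
  obtain K I where "K \<union> I = V" "K \<inter> I =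
      {}" "is_clique E K" "is_independent E I" "K \<noteq> {}"
    using split_graph_nonempty_clique[OF assms(2) False] by blast
  then interpret split_uniform_rep w V E K I "length w0"
    using w assms(1) by unfold_locales auto
  show ?thesis using uniform_word3 represents_word3 by blast
qed

theorem theorem5:
  fixes V :: "'a set" and E :: "'a \<Rightarrow> 'a \<Rightarrow> bool"
  assumes "simple_graph V E"
    and "split_graph V E"
    and "word_representable V E"
  shows "representation_number V E \<le> 3"
proof -
  obtain w where "uniform 3 w \<and> represents w V E"
    using exists_3_uniform_representation[OF assms] by blast
  then show ?thesis unfolding representation_number_def by (intro Least_le) blast
qed

end
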